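(* Let $X=\{x_1,\dots,x_n\}$ be a finite biquandle and let $K$ be a knotoid in $S^2$ or in $\mathbb{R}^2$. For a diagram $D$ of $K$ and $1\le j,k\le n$, let $\mathcal{C}_{jk}(D)$ be the set of $X$-colorings of $D$ in which the initial semiarc (the semiarc incident to the tail) is colored $x_j$ and the final semiarc (the semiarc incident to the head) is colored $x_k$. Define the $n\times n$ matrix $\Phi_X^{M_n}(D)$ whose entry in row $j$, column $k$ is $|\mathcal{C}_{jk}(D)|$. Then $\Phi_X^{M_n}(D)$ does not depend on the choice of diagram $D$ of $K$; that is, if $D$ and $D'$ are two knotoid diagrams representing the same knotoid, then $\Phi_X^{M_n}(D)=\Phi_X^{M_n}(D')$. Hence $\Phi_X^{M_n}(K):=\Phi_X^{M_n}(D)$ is an invariant of knotoids.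
   Context: A biquandle is a set $X$ together with, for each $b\in X$, two bijections $\alpha_b,\beta_b:X\to X$ such that: (i) $\alpha_a(a)=\beta_a(a)$ for all $a\in X$; (ii) the map $S:X\times X\to X\times X$, $S(a,b)=(\alpha_a(b),\beta_b(a))$, is invertible; (iii) for all $a,b\in X$: $\alpha_{\alpha_a(b)}\alpha_a=\alpha_{\beta_b(a)}\alpha_b$, $\beta_{\alpha_a(b)}\alpha_a=\alpha_{\beta_b(a)}\beta_b$, and $\beta_{\beta_a(b)}\beta_a=\beta_{\alpha_b(a)}\beta_b$. A knotoid diagram in a surface $\Sigma$ ($\Sigma=S^2$ or $\mathbb{R}^2$) is a generic immersion of $[0,1]$ into $\Sigma$ whose only singularities are finitely many transverse double points (crossings) endowed with over/under information, oriented from the image of $0$ (the tail) to the image of $1$ (the head), the tail and head being distinct points which are not crossings. A knotoid is an equivalence class of knotoid diagrams under isotopy of $\Sigma$ and the three Reidemeister moves performed in disks disjoint from the tail and the head (in particular, moving an endpoint over or under a transverse strand is not allowed). A semiarc of a diagram is a piece of the curve connecting two consecutive crossings, or an endpoint to a crossing (or, for a crossingless diagram, the whole curve). Crossings carry the usual sign $\pm1$ determined by the orientation. An $X$-coloring of a knotoid diagram is an assignment of an element of $X$ to each semiarc such that at each crossing the following holds. At a positive crossing, if the incoming under-semiarc is colored $a$ and the outgoing over-semiarc is colored $b$, then the outgoing under-semiarc is colored $\beta_b(a)$ and the incoming over-semiarc is colored $\alpha_a(b)$. At a negative crossing, if the outgoing under-semiarc is colored $a$ and the incoming over-semiarc is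 colored $b$, then the incoming under-semiarc is colored $\beta_b(a)$ and the outgoing over-semiarc is colored $\alpha_a(b)$. (With this convention, for any Reidemeister move each coloring before the move corresponds to a unique coloring after the move agreeing outside the disk of the move.) *)

theory Defs
  imports "HOL-Library.FuncSet" "Jordan_Normal_Form.Matrix"
begin

definition biquandle :: "'a set \<Rightarrow> ('a \<Rightarrow> 'a \<Rightarrow> 'a) \<Rightarrow> ('a \<Rightarrow> 'a \<Rightarrow> 'a) \<Rightarrow> bool" where
  "biquandle X alpha beta \<longleftrightarrow>
     (\<forall>b\<in>X. bij_betw (alpha b) X X \<and> bij_betw (beta b) X X)
   \<and> (\<forall>a\<in>X. alpha a a = beta a a)
   \<and> bij_betw (\<lambda>(a, b). (alpha a b, beta b a)) (X \<times> X) (X \<times> X)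
   \<and> (\<forall>a\<in>X. \<forall>b\<in>X. \<forall>x\<in>X.
        alpha (alpha a b) (alpha a x) = alpha (beta b a) (alpha b x)
      \<and> beta (alpha a b) (alpha a x) = alpha (beta b a) (beta b x)
      \<and> beta (beta a b) (beta a x) = beta (alpha b a) (beta b x))"

text \<open>A knotoid diagram is encoded by its Gauss code, read from the tail to the head:
  a list of letters (l, ov, sg), one per passage of the curve through a crossing,
  where l is the label of the crossing, ov is True iff the passage is the over-strand,
  and sg is True iff the crossing is positive.
  With a code w of length n, the semiarcs are numbered 0..n along the orientation:
  the i-th letter (0-based) is the passage from semiarc i to semiarc i+1; semiarc 0 is
  the initial semiarc (at the tail) and semiarc n the final one (at the head).\<close>

type_synonym letter = "nat \<times> bool \<times> bool"

definition valid_code :: "letter list \<Rightarrow> bool" where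
  "valid_code w \<longleftrightarrow>
     (\<forall>l \<in> fst ` set w. \<exists>s. \<exists>i<length w. \<exists>j<length w.
         w ! i = (l, True, s) \<and> w ! j = (l, False, s) \<and>
         (\<forall>k<length w. fst (w ! k) = l \<longrightarrow> k = i \<or> k = j))"

section \<open>Reidemeister moves (away from the endpoints)\<close>

text \<open>Three strands T (top), M (middle), B (bottom);
  crossing x: T over M, y: T over B, z: M over B, with signs sx, sy, sz.
  oT: T meets x before y; oM: M meets x before z; oB: B meets y before z.\<close>

definition r3_seg :: "nat \<Rightarrow> nat \<Rightarrow> nat \<Rightarrow> bool \<Rightarrow> bool \<Rightarrow> bool \<Rightarrow>
    bool \<Rightarrow> bool \<Rightarrow> bool \<Rightarrow> nat \<Rightarrow> letter list" where
  "r3_seg x y z sx sy sz oT oM oB i =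
     (if i = 0 then (if oT then [(x, True, sx), (y, True, sy)] else [(y, True, sy), (x, True, sx)])
      else if i = 1 then (if oM then [(x, False, sx), (z, True, sz)] else [(z, True, sz), (x, False, sx)])
      else (if oB then [(y, False, sy), (z, False, sz)] else [(z, False, sz), (y, False, sy)]))"

text \<open>The sign/order configurations realised by three strands in a disk
  (computed from three oriented lines in general position).\<close>

definition r3_ok :: "bool \<Rightarrow> bool \<Rightarrow> bool \<Rightarrow> bool \<Rightarrow> bool \<Rightarrow> bool \<Rightarrow> bool" where
  "r3_ok sx sy sz oT oM oB \<longleftrightarrow> ((oM \<noteq> oB) = (sx \<noteq> sy)) \<and> ((oT \<noteq> oB) = (sx \<noteq> sz))"

inductive kmove :: "letter list \<Rightarrow> letter list \<Rightarrow> bool" where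
  R1: "valid_code (u @ [(l, ov, s), (l, \<not> ov, s)] @ v) \<Longrightarrow>
       kmove (u @ [(l, ov, s), (l, \<not> ov, s)] @ v) (u @ v)"
| R2_same: "valid_code (u @ [(a, ov, s), (b, ov, \<not> s)] @ v @ [(a, \<not> ov, s), (b, \<not> ov, \<not> s)] @ x) \<Longrightarrow>
       kmove (u @ [(a, ov, s), (b, ov, \<not> s)] @ v @ [(a, \<not> ov, s), (b, \<not> ov, \<not> s)] @ x) (u @ v @ x)"
| R2_opp: "valid_code (u @ [(a, ov, s), (b, ov, \<not> s)] @ v @ [(b, \<not> ov, \<not> s), (a, \<not> ov, s)] @ x) \<Longrightarrow>
       kmove (u @ [(a, ov, s), (b, ov, \<not> s)] @ v @ [(b, \<not> ov, \<not> s), (a, \<not> ov, s)] @ x) (u @ v @ x)"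
| R3: "\<lbrakk> i < 3; j < 3; k < 3; distinct [i, j, k]; r3_ok sx sy sz oT oM oB;
         valid_code (p1 @ r3_seg x y z sx sy sz oT oM oB i @ p2 @ r3_seg x y z sx sy sz oT oM oB j
                     @ p3 @ r3_seg x y z sx sy sz oT oM oB k @ p4) \<rbrakk> \<Longrightarrow>
       kmove (p1 @ r3_seg x y z sx sy sz oT oM oB i @ p2 @ r3_seg x y z sx sy sz oT oM oB j
                @ p3 @ r3_seg x y z sx sy sz oT oM oB k @ p4)
             (p1 @ r3_seg x y z sx sy sz (\<not> oT) (\<not> oM) (\<not> oB) i @ p2 @ r3_seg x y z sx sy sz (\<not> oT) (\<not> oM) (\<not> oB) j
                @ p3 @ r3_seg x y z sx sy sz (\<not> oT) (\<not> oM) (\<not> oB) k @ p4)"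
| relabel: "\<lbrakk> valid_code w; inj_on f (fst ` set w) \<rbrakk> \<Longrightarrow>
       kmove w (map (\<lambda>(l, ov, s). (f l, ov, s)) w)"

definition knotoid_equiv :: "letter list \<Rightarrow> letter list \<Rightarrow> bool" where
  "knotoid_equiv = equivclp kmove"

definition is_coloring :: "('a \<Rightarrow> 'a \<Rightarrow> 'a) \<Rightarrow> ('a \<Rightarrow> 'a \<Rightarrow> 'a) \<Rightarrow> letter list \<Rightarrow> (nat \<Rightarrow> 'a) \<Rightarrow> bool" where
  "is_coloring alpha beta w c \<longleftrightarrow>
     (\<forall>i<length w. \<forall>j<length w. \<forall>l s.
        w ! i = (l, True, s) \<longrightarrow> w ! j = (l, False, s) \<longrightarrow>
          (if s then
             \<comment> \<open>positive: a = incoming under, b = outgoing over\<close>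
             c (Suc j) = beta (c (Suc i)) (c j) \<and> c i = alpha (c j) (c (Suc i))
           else
             \<comment> \<open>negative: a = outgoing under, b = incoming over\<close>
             c j = beta (c i) (c (Suc j)) \<and> c (Suc i) = alpha (c (Suc j)) (c i)))"

definition colorings :: "'a set \<Rightarrow> ('a \<Rightarrow> 'a \<Rightarrow> 'a) \<Rightarrow> ('a \<Rightarrow> 'a \<Rightarrow> 'a) \<Rightarrow> letter list \<Rightarrow>
    'a \<Rightarrow> 'a \<Rightarrow> (nat \<Rightarrow> 'a) set" where
  "colorings X alpha beta w p q =
     {c \<in> {0..length w} \<rightarrow>\<^sub>E X. is_coloring alpha beta w c \<and> c 0 = p \<and> c (length w) = q}"

definition coloring_matrix :: "'a list \<Rightarrow> ('a \<Rightarrow> 'a \<Rightarrow> 'a) \<Rightarrow> ('a \<Rightarrow> 'a \<Rightarrow> 'a) \<Rightarrow> letter list \<Rightarrow> nat mat" where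
  "coloring_matrix xs alpha beta w =
     mat (length xs) (length xs)
       (\<lambda>(j, k). card (colorings (set xs) alpha beta w (xs ! j) (xs ! k)))"

end

theory Submission
  imports Defs
begin

text \<open>A coloring is recorded as the list of colors of the semiarcs, and the crossing relations become a
  condition on the set of letters annotated with the colors before and after them.  Every move changes
  the code only on a few blocks whose crossing labels occur nowhere else, so this condition splits
  into an unchanged outer part and a local part.  For each move and each choice of colors on the
  boundary of the blocks, the biquandle axioms show that the local part is solvable on one side of
  the move iff it is solvable on the other, and that the solution is unique; hence forgetting the
  interior colors matches the colorings with prescribed initial and final colors on the two sides.\<close>

section \<open>Colorings as lists\<close>

text \<open>oi, oo, ui, uo are the colors of the incoming and outgoing over- and under-semiarcs.\<close>

definition crossing_ok :: "('a \<Rightarrow> 'a \<Rightarrow> 'a) \<Rightarrow> ('a \<Rightarrow> 'a \<Rightarrow> 'a) \<Rightarrow> bool \<Rightarrow> 'a \<Rightarrow> 'a \<Rightarrow> 'a \<Rightarrow> 'a \<Rightarrow> bool" where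
  "crossing_ok alpha beta s oi oo ui uo \<longleftrightarrow>
     (if s then uo = beta oo ui \<and> oi = alpha ui oo else ui = beta oi uo \<and> oo = alpha uo oi)"

fun annotate :: "letter list \<Rightarrow> 'a list \<Rightarrow> (letter \<times> 'a \<times> 'a) list" where
  "annotate [] cs = []"
| "annotate (x # w) cs = (x, hd cs, hd (tl cs)) # annotate w (tl cs)"

definition consistent :: "('a \<Rightarrow> 'a \<Rightarrow> 'a) \<Rightarrow> ('a \<Rightarrow> 'a \<Rightarrow> 'a) \<Rightarrow> (letter \<times> 'a \<times> 'a) set \<Rightarrow> bool" where
  "consistent alpha beta S \<longleftrightarrow>
     (\<forall>l s a a' b b'. ((l, True, s), a, a') \<in> S \<longrightarrow> ((l, False, s), b, b') \<in> S \<longrightarrow>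
        crossing_ok alpha beta s a a' b b')"

definition color_lists :: "'a set \<Rightarrow> ('a \<Rightarrow> 'a \<Rightarrow> 'a) \<Rightarrow> ('a \<Rightarrow> 'a \<Rightarrow> 'a) \<Rightarrow> letter list \<Rightarrow> 'a \<Rightarrow> 'a \<Rightarrow> 'a list set" where
  "color_lists X alpha beta w p q =
     {cs. set cs \<subseteq> X \<and> length cs = Suc (length w) \<and> consistent alpha beta (set (annotate w cs))
          \<and> hd cs = p \<and> last cs = q}"

lemma length_annotate [simp]: "length (annotate w cs) = length w"
  by (induction w arbitrary: cs) auto

lemma map_fst_annotate [simp]: "map fst (annotate w cs) = w"
  by (induction w arbitrary: cs) auto

lemma label_annotate: "e \<in> set (annotate w cs) \<Longrightarrow> fst (fst e) \<in> fst ` set w"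
  by (metis image_eqI list.set_map map_fst_annotate)

lemma nth_annotate:
  "i < length w \<Longrightarrow> length cs = Suc (length w) \<Longrightarrow> annotate w cs ! i = (w ! i, cs ! i, cs ! Suc i)"
proof (induction w arbitrary: cs i)
  case (Cons x w)
  then obtain c cs' where "cs = c # cs'" by (cases cs) auto
  with Cons show ?case by (cases i; cases cs') (auto simp: hd_conv_nth)
qed simp

lemma annotate_append:
  "length C = length u \<Longrightarrow> R \<noteq> [] \<Longrightarrow> annotate (u @ v) (C @ R) = annotate u (C @ [hd R]) @ annotate v R"
proof (induction u arbitrary: C)
  case (Cons x u)
  then obtain c C' where C: "C = c # C'" by (cases C) auto
  have "hd (C' @ R) = hd (C' @ [hd R])" using Cons.prems by (cases C') auto
  then show ?case using Cons.IH[of C'] Cons.prems C by simp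
qed simp

lemma annotate_Cons2:
  "length g = 2 \<Longrightarrow> R \<noteq> [] \<Longrightarrow> annotate (g @ w) (e # d # R) = annotate g [e, d, hd R] @ annotate w R"
  using annotate_append[of "[e, d]" g R w] by simp

lemma annotate_map:
  "annotate (map F w) cs = map (\<lambda>(x, a, b). (F x, a, b)) (annotate w cs)"
  by (induction w arbitrary: cs) auto

lemma consistent_Un:
  assumes "\<And>e e'. e \<in> A \<Longrightarrow> e' \<in> B \<Longrightarrow> fst (fst e) \<noteq> fst (fst e')"
  shows "consistent alpha beta (A \<union> B) \<longleftrightarrow> consistent alpha beta A \<and> consistent alpha beta B"
  using assms unfolding consistent_def by (metis Un_iff fst_conv)

lemma is_coloring_iff_consistent:
  "is_coloring alpha beta w c \<longleftrightarrow> consistent alpha beta (set (annotate w (map c [0..<Suc (length w)])))"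
proof -
  have mem: "e \<in> set (annotate w (map c [0..<Suc (length w)])) \<longleftrightarrow> (\<exists>i<length w. e = (w ! i, c i, c (Suc i)))" for e
    by (auto simp: in_set_conv_nth nth_annotate simp del: upt_Suc)
  show ?thesis
    unfolding is_coloring_def consistent_def mem crossing_ok_def
  proof (intro iffI allI impI)
    fix l s a a' b b'
    assume "\<exists>i<length w. ((l, True, s), a, a') = (w ! i, c i, c (Suc i))"
      and "\<exists>j<length w. ((l, False, s), b, b') = (w ! j, c j, c (Suc j))"
    moreover assume "\<forall>i<length w. \<forall>j<length w. \<forall>l s. w ! i = (l, True, s) \<longrightarrow> w ! j = (l, False, s) \<longrightarrow>
      (if s then c (Suc j) = beta (c (Suc i)) (c j) \<and> c i = alpha (c j) (c (Suc i))
       else c j = beta (c i) (c (Suc j)) \<and> c (Suc i) = alpha (c (Suc j)) (c i))"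
    ultimately show "if s then b' = beta a' b \<and> a = alpha b a' else b = beta a b' \<and> a' = alpha b' a"
      by (metis (no_types, lifting) prod.inject)
  next
    fix i j l s
    assume ij: "i < length w" "j < length w" "w ! i = (l, True, s)" "w ! j = (l, False, s)"
    assume H: "\<forall>l s a a' b b'. (\<exists>i<length w. ((l, True, s), a, a') = (w ! i, c i, c (Suc i))) \<longrightarrow>
      (\<exists>j<length w. ((l, False, s), b, b') = (w ! j, c j, c (Suc j))) \<longrightarrow>
      (if s then b' = beta a' b \<and> a = alpha b a' else b = beta a b' \<and> a' = alpha b' a)"
    show "if s then c (Suc j) = beta (c (Suc i)) (c j) \<and> c i = alpha (c j) (c (Suc i))
       else c j = beta (c i) (c (Suc j)) \<and> c (Suc i) = alpha (c (Suc j)) (c i)"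
    proof (rule H[rule_format])
      show "\<exists>i'<length w. ((l, True, s), c i, c (Suc i)) = (w ! i', c i', c (Suc i'))"
        using ij(1,3) by (intro exI[of _ i]) simp
      show "\<exists>j'<length w. ((l, False, s), c j, c (Suc j)) = (w ! j', c j', c (Suc j'))"
        using ij(2,4) by (intro exI[of _ j]) simp
    qed
  qed
qed

lemma card_colorings_eq_card_color_lists:
  "card (colorings X alpha beta w p q) = card (color_lists X alpha beta w p q)"
proof -
  let ?n = "length w"
  let ?list = "\<lambda>c. map c [0..<Suc ?n]"
  have "bij_betw ?list (colorings X alpha beta w p q) (color_lists X alpha beta w p q)"
  proof (rule bij_betwI'[where f = ?list])
    fix c d assume "c \<in> colorings X alpha beta w p q" "d \<in> colorings X alpha beta w p q"
    then have c: "c \<in> {0..?n} \<rightarrow>\<^sub>E X" and d: "d \<in> {0..?n} \<rightarrow>\<^sub>E X" unfolding colorings_def by auto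
    show "?list c = ?list d \<longleftrightarrow> c = d"
    proof
      assume "?list c = ?list d"
      then have "\<forall>k\<in>set [0..<Suc ?n]. c k = d k" by (simp only: map_eq_conv)
      then show "c = d" by (intro PiE_ext[OF c d]) (simp del: upt_Suc)
    qed simp
  next
    fix c assume "c \<in> colorings X alpha beta w p q"
    then show "?list c \<in> color_lists X alpha beta w p q"
      unfolding colorings_def color_lists_def
      by (auto simp: is_coloring_iff_consistent hd_map last_map simp del: upt_Suc)
  next
    fix cs assume cs: "cs \<in> color_lists X alpha beta w p q"
    then have len: "length cs = Suc ?n" by (simp add: color_lists_def)
    let ?c = "restrict (\<lambda>k. cs ! k) {0..?n}"
    have list_c: "?list ?c = cs"
      by (rule nth_equalityI) (auto simp: len simp del: upt_Suc)
    have "is_coloring alpha beta w ?c"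
      using cs unfolding is_coloring_iff_consistent list_c color_lists_def by blast
    moreover have "cs \<noteq> []" using len by auto
    ultimately have "?c \<in> colorings X alpha beta w p q"
      using cs len unfolding colorings_def color_lists_def
      by (auto simp: hd_conv_nth last_conv_nth)
    then show "\<exists>c\<in>colorings X alpha beta w p q. cs = ?list c" using list_c by metis
  qed
  then show ?thesis by (rule bij_betw_same_card)
qed

lemma finite_color_lists: "finite X \<Longrightarrow> finite (color_lists X alpha beta w p q)"
  by (rule finite_subset[OF _ finite_lists_length_eq[of X "Suc (length w)"]]) (auto simp: color_lists_def)

lemma split_list_at:
  assumes "length cs = n + m"
  obtains C R where "cs = C @ R" "length C = n" "length R = m"
  using assms by (intro that[of "take n cs" "drop n cs"]) simp_all

lemma split_list_around_pair:
  assumes "length cs = n + 2 + m"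
  obtains C e d R where "cs = C @ e # d # R" "length C = n" "length R = m"
proof -
  obtain C R' where "cs = C @ R'" "length C = n" "length R' = Suc (Suc m)"
    using assms by (elim split_list_at) simp
  then show thesis using that by (cases R' rule: remdups_adj.cases) auto
qed

section \<open>Finite biquandles\<close>

locale finite_biquandle =
  fixes X :: "'a set" and alpha beta :: "'a \<Rightarrow> 'a \<Rightarrow> 'a"
  assumes finite_X: "finite X" and biquandle: "biquandle X alpha beta"
begin

lemma bij_alpha: "b \<in> X \<Longrightarrow> bij_betw (alpha b) X X"
  and bij_beta: "b \<in> X \<Longrightarrow> bij_betw (beta b) X X"
  and alpha_diag: "a \<in> X \<Longrightarrow> alpha a a = beta a a"
  and bij_switch: "bij_betw (\<lambda>(a, b). (alpha a b, beta b a)) (X \<times> X) (X \<times> X)"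
  and alpha_alpha: "\<lbrakk>a \<in> X; b \<in> X; x \<in> X\<rbrakk> \<Longrightarrow> alpha (alpha a b) (alpha a x) = alpha (beta b a) (alpha b x)"
  and beta_alpha: "\<lbrakk>a \<in> X; b \<in> X; x \<in> X\<rbrakk> \<Longrightarrow> beta (alpha a b) (alpha a x) = alpha (beta b a) (beta b x)"
  and beta_beta: "\<lbrakk>a \<in> X; b \<in> X; x \<in> X\<rbrakk> \<Longrightarrow> beta (beta a b) (beta a x) = beta (alpha b a) (beta b x)"
  using biquandle unfolding biquandle_def by blast+

lemma alpha_closed: "a \<in> X \<Longrightarrow> b \<in> X \<Longrightarrow> alpha a b \<in> X"
  using bij_alpha bij_betw_apply by metis

lemma beta_closed: "a \<in> X \<Longrightarrow> b \<in> X \<Longrightarrow> beta a b \<in> X"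
  using bij_beta bij_betw_apply by metis

lemma alpha_inj: "\<lbrakk>a \<in> X; x \<in> X; y \<in> X; alpha a x = alpha a y\<rbrakk> \<Longrightarrow> x = y"
  using bij_alpha unfolding bij_betw_def inj_on_def by blast

lemma beta_inj: "\<lbrakk>a \<in> X; x \<in> X; y \<in> X; beta a x = beta a y\<rbrakk> \<Longrightarrow> x = y"
  using bij_beta unfolding bij_betw_def inj_on_def by blast

lemma alpha_surj: "a \<in> X \<Longrightarrow> y \<in> X \<Longrightarrow> \<exists>x\<in>X. alpha a x = y"
  using bij_alpha unfolding bij_betw_def by (metis imageE)

lemma beta_surj: "a \<in> X \<Longrightarrow> y \<in> X \<Longrightarrow> \<exists>x\<in>X. beta a x = y"
  using bij_beta unfolding bij_betw_def by (metis imageE)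

lemma switch_inj:
  "\<lbrakk>a \<in> X; b \<in> X; a' \<in> X; b' \<in> X; alpha a b = alpha a' b'; beta b a = beta b' a'\<rbrakk> \<Longrightarrow> a = a' \<and> b = b'"
  using bij_switch unfolding bij_betw_def inj_on_def by fastforce

lemma switch_surj: "p \<in> X \<Longrightarrow> r \<in> X \<Longrightarrow> \<exists>a\<in>X. \<exists>b\<in>X. alpha a b = p \<and> beta b a = r"
proof -
  assume "p \<in> X" "r \<in> X"
  then have "(p, r) \<in> (\<lambda>(a, b). (alpha a b, beta b a)) ` (X \<times> X)"
    using bij_switch unfolding bij_betw_def by simp
  then show ?thesis by auto
qed

lemma alpha_diag_inj: "\<lbrakk>a \<in> X; b \<in> X; alpha a a = alpha b b\<rbrakk> \<Longrightarrow> a = b"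
  using switch_inj[of a a b b] alpha_diag by simp

text \<open>Finiteness of X is used only here (an injective self-map of a finite set is onto); it is what
  makes every kink of an R1 move colorable.\<close>

lemma alpha_diag_surj: "t \<in> X \<Longrightarrow> \<exists>d\<in>X. alpha d d = t"
proof -
  assume "t \<in> X"
  have "inj_on (\<lambda>d. alpha d d) X" using alpha_diag_inj by (auto intro: inj_onI)
  moreover have "(\<lambda>d. alpha d d) ` X \<subseteq> X" using alpha_closed by blast
  ultimately have "(\<lambda>d. alpha d d) ` X = X" using finite_X by (simp add: endo_inj_surj)
  with \<open>t \<in> X\<close> have "t \<in> (\<lambda>d. alpha d d) ` X" by simp
  then show ?thesis by blast
qed

lemma switch_fixed_diag:
  assumes "a \<in> X" "b \<in> X" "d \<in> X" "alpha a b = d" "beta b a = d"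
  shows "a = b"
proof -
  obtain e where "e \<in> X" "alpha e e = d" using alpha_diag_surj \<open>d \<in> X\<close> by blast
  with assms show ?thesis using switch_inj[of a b e e] alpha_diag[of e] by auto
qed

end

section \<open>Reidemeister move I\<close>

text \<open>a, d, b are the colors before, inside and after the kink; ov tells whether the kink is entered
  on the over-strand.\<close>

definition kink_ok :: "('a \<Rightarrow> 'a \<Rightarrow> 'a) \<Rightarrow> ('a \<Rightarrow> 'a \<Rightarrow> 'a) \<Rightarrow> bool \<Rightarrow> bool \<Rightarrow> 'a \<Rightarrow> 'a \<Rightarrow> 'a \<Rightarrow> bool" where
  "kink_ok alpha beta ov s a d b \<longleftrightarrow>
     (if ov then crossing_ok alpha beta s a d d b else crossing_ok alpha beta s d b a d)"

lemma consistent_kink: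
  "consistent alpha beta (set (annotate [(l, ov, s), (l, \<not> ov, s)] [a, d, b])) \<longleftrightarrow> kink_ok alpha beta ov s a d b"
  unfolding consistent_def kink_ok_def by (cases ov) auto

context finite_biquandle
begin

lemma kink_ok_iff:
  assumes "d \<in> X"
  shows "kink_ok alpha beta ov s a d b \<longleftrightarrow>
    (if ov = s then a = alpha d d \<and> b = alpha d d
     else if ov then alpha b a = d \<and> beta a b = d else alpha a b = d \<and> beta b a = d)"
  using alpha_diag[OF assms] unfolding kink_ok_def crossing_ok_def by (cases ov; cases s) auto

lemma kink_ok_ends_eq: "\<lbrakk>a \<in> X; d \<in> X; b \<in> X; kink_ok alpha beta ov s a d b\<rbrakk> \<Longrightarrow> a = b"
  using switch_fixed_diag[of a b d] switch_fixed_diag[of b a d] by (auto simp: kink_ok_iff split: if_splits)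

lemma kink_ok_exists: "a \<in> X \<Longrightarrow> \<exists>d\<in>X. kink_ok alpha beta ov s a d a"
proof -
  assume a: "a \<in> X"
  obtain e where e: "e \<in> X" "alpha e e = a" using alpha_diag_surj a by blast
  have "kink_ok alpha beta ov s a (if ov = s then e else alpha a a) a"
    using e alpha_diag[OF a] alpha_closed[OF a a] by (simp add: kink_ok_iff)
  then show ?thesis using e alpha_closed[OF a a] by (metis (full_types))
qed

lemma kink_ok_unique:
  "\<lbrakk>d \<in> X; d' \<in> X; kink_ok alpha beta ov s a d b; kink_ok alpha beta ov s a d' b\<rbrakk> \<Longrightarrow> d = d'"
  using alpha_diag_inj[of d d'] by (auto simp: kink_ok_iff split: if_splits)

lemma color_lists_R1_iff:
  assumes lab: "l \<notin> fst ` set (u @ v)" and len: "length C = length u" "length R = Suc (length v)"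
  shows "C @ e # d # R \<in> color_lists X alpha beta (u @ [(l, ov, s), (l, \<not> ov, s)] @ v) p q \<longleftrightarrow>
    C @ R \<in> color_lists X alpha beta (u @ v) p q \<and> e = hd R \<and> d \<in> X \<and> kink_ok alpha beta ov s e d e"
    (is "?cs \<in> ?A \<longleftrightarrow> ?cs' \<in> ?B \<and> _")
proof -
  have R: "R \<noteq> []" using len by auto
  let ?out = "set (annotate u (C @ [e])) \<union> set (annotate v R)"
  let ?kink = "set (annotate [(l, ov, s), (l, \<not> ov, s)] [e, d, hd R])"
  have set_cs: "set (annotate (u @ [(l, ov, s), (l, \<not> ov, s)] @ v) ?cs) = ?out \<union> ?kink"
    using len R by (auto simp: annotate_append)
  have union: "consistent alpha beta (?out \<union> ?kink) \<longleftrightarrow> consistent alpha beta ?out \<and> consistent alpha beta ?kink"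
  proof (rule consistent_Un)
    fix x y assume "x \<in> ?out" "y \<in> ?kink"
    then have "fst (fst x) \<in> fst ` set (u @ v)" "fst (fst y) = l" by (auto dest!: label_annotate)
    with lab show "fst (fst x) \<noteq> fst (fst y)" by metis
  qed
  have split: "consistent alpha beta (set (annotate (u @ [(l, ov, s), (l, \<not> ov, s)] @ v) ?cs)) \<longleftrightarrow>
    consistent alpha beta ?out \<and> kink_ok alpha beta ov s e d (hd R)"
    unfolding set_cs union consistent_kink ..
  have out: "?out = set (annotate (u @ v) ?cs')" if "e = hd R"
    using len R that by (simp add: annotate_append)
  have ends: "hd ?cs = hd ?cs'" "last ?cs = last ?cs'" if "e = hd R"
    using R that by (simp_all add: hd_append)
  have hdR: "hd R \<in> set ?cs" "hd R \<in> set ?cs'" using R by simp_all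
  show ?thesis
  proof
    assume cs: "?cs \<in> ?A"
    then have "e = hd R" using kink_ok_ends_eq[of e d "hd R"] hdR split unfolding color_lists_def by auto
    then show "?cs' \<in> ?B \<and> e = hd R \<and> d \<in> X \<and> kink_ok alpha beta ov s e d e"
      using cs split out ends len unfolding color_lists_def by auto
  next
    assume "?cs' \<in> ?B \<and> e = hd R \<and> d \<in> X \<and> kink_ok alpha beta ov s e d e"
    then show "?cs \<in> ?A" using split out ends hdR len unfolding color_lists_def by auto
  qed
qed

lemma card_color_lists_R1:
  assumes lab: "l \<notin> fst ` set (u @ v)"
  shows "card (color_lists X alpha beta (u @ [(l, ov, s), (l, \<not> ov, s)] @ v) p q) =
    card (color_lists X alpha beta (u @ v) p q)"
    (is "card ?A = card ?B")
proof -
  let ?forget = "\<lambda>cs. take (length u) cs @ drop (length u + 2) cs"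
  have split: thesis if cs: "cs \<in> ?A" and decomp: "\<And>C e d R. cs = C @ e # d # R \<Longrightarrow> length C = length u \<Longrightarrow>
      length R = Suc (length v) \<Longrightarrow> thesis" for cs thesis
  proof -
    have "length cs = length u + 2 + Suc (length v)" using cs by (simp add: color_lists_def)
    then show thesis by (elim split_list_around_pair) (rule decomp)
  qed
  have forget: "?forget (C @ e # d # R) = C @ R" if "length C = length u" for C R :: "'a list" and e d
    using that by simp
  have inj: "inj_on ?forget ?A"
  proof (rule inj_onI)
    fix cs cs' assume cs: "cs \<in> ?A" and cs': "cs' \<in> ?A" and eq: "?forget cs = ?forget cs'"
    obtain C e d R where dec: "cs = C @ e # d # R" and len: "length C = length u" "length R = Suc (length v)"
      by (rule split[OF cs])
    obtain C' e' d' R' where dec': "cs' = C' @ e' # d' # R'" and len': "length C' = length u" "length R' = Suc (length v)"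
      by (rule split[OF cs'])
    have same: "C' = C" "R' = R" using eq len len' unfolding dec dec' forget[OF len(1)] forget[OF len'(1)]
      by simp_all
    have "e = hd R" "e' = hd R" "d \<in> X" "d' \<in> X"
      "kink_ok alpha beta ov s (hd R) d (hd R)" "kink_ok alpha beta ov s (hd R) d' (hd R)"
      using cs cs' unfolding dec dec' same color_lists_R1_iff[OF lab len] by auto
    then show "cs = cs'" using kink_ok_unique[of d d'] unfolding dec dec' same by simp
  qed
  have image: "?forget ` ?A = ?B"
  proof (intro equalityI subsetI)
    fix cs' assume "cs' \<in> ?forget ` ?A"
    then obtain cs where cs: "cs \<in> ?A" and cs': "cs' = ?forget cs" by blast
    obtain C e d R where dec: "cs = C @ e # d # R" and len: "length C = length u" "length R = Suc (length v)"
      by (rule split[OF cs])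
    show "cs' \<in> ?B" using cs unfolding cs' dec forget[OF len(1)] color_lists_R1_iff[OF lab len] by blast
  next
    fix cs' assume cs': "cs' \<in> ?B"
    then have "length cs' = length u + Suc (length v)" by (simp add: color_lists_def)
    then obtain C R where dec: "cs' = C @ R" and len: "length C = length u" "length R = Suc (length v)"
      by (rule split_list_at)
    then have "hd R \<in> X" using cs' by (cases R) (auto simp: color_lists_def)
    then obtain d where "d \<in> X" "kink_ok alpha beta ov s (hd R) d (hd R)" using kink_ok_exists by blast
    then have "C @ hd R # d # R \<in> ?A" using cs' unfolding dec color_lists_R1_iff[OF lab len] by simp
    then have "?forget (C @ hd R # d # R) \<in> ?forget ` ?A" by (rule imageI)
    then show "cs' \<in> ?forget ` ?A" unfolding dec forget[OF len(1)] .
  qed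
  show ?thesis using card_image[OF inj] unfolding image by simp
qed

end

section \<open>Reidemeister move II\<close>

text \<open>The strand colored p, d1, p' passes over the strand colored r, d2, r', which meets the two
  crossings in the same order (r2_same_ok) or in the opposite order (r2_opp_ok).\<close>

definition r2_same_ok :: "('a \<Rightarrow> 'a \<Rightarrow> 'a) \<Rightarrow> ('a \<Rightarrow> 'a \<Rightarrow> 'a) \<Rightarrow> bool \<Rightarrow> 'a \<Rightarrow> 'a \<Rightarrow> 'a \<Rightarrow> 'a \<Rightarrow> 'a \<Rightarrow> 'a \<Rightarrow> bool" where
  "r2_same_ok alpha beta s p d1 p' r d2 r' \<longleftrightarrow>
     crossing_ok alpha beta s p d1 r d2 \<and> crossing_ok alpha beta (\<not> s) d1 p' d2 r'"

definition r2_opp_ok :: "('a \<Rightarrow> 'a \<Rightarrow> 'a) \<Rightarrow> ('a \<Rightarrow> 'a \<Rightarrow> 'a) \<Rightarrow> bool \<Rightarrow> 'a \<Rightarrow> 'a \<Rightarrow> 'a \<Rightarrow> 'a \<Rightarrow> 'a \<Rightarrow> 'a \<Rightarrow> bool" where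
  "r2_opp_ok alpha beta s p d1 p' r d2 r' \<longleftrightarrow>
     crossing_ok alpha beta s p d1 d2 r' \<and> crossing_ok alpha beta (\<not> s) d1 p' r d2"

lemma consistent_R2_same:
  assumes "a \<noteq> b"
  shows "consistent alpha beta (set (annotate [(a, ov, s), (b, ov, \<not> s)] [p, d1, p']) \<union>
      set (annotate [(a, \<not> ov, s), (b, \<not> ov, \<not> s)] [r, d2, r'])) \<longleftrightarrow>
    (if ov then r2_same_ok alpha beta s p d1 p' r d2 r' else r2_same_ok alpha beta s r d2 r' p d1 p')"
  using assms unfolding consistent_def r2_same_ok_def by (cases ov) auto

lemma consistent_R2_opp:
  assumes "a \<noteq> b"
  shows "consistent alpha beta (set (annotate [(a, ov, s), (b, ov, \<not> s)] [p, d1, p']) \<union>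
      set (annotate [(b, \<not> ov, \<not> s), (a, \<not> ov, s)] [r, d2, r'])) \<longleftrightarrow>
    (if ov then r2_opp_ok alpha beta s p d1 p' r d2 r' else r2_opp_ok alpha beta (\<not> s) r d2 r' p d1 p')"
  using assms unfolding consistent_def r2_opp_ok_def by (cases ov) auto

context finite_biquandle
begin

lemma r2_same_ok_ends_eq:
  assumes "p \<in> X" "d1 \<in> X" "p' \<in> X" "r \<in> X" "d2 \<in> X" "r' \<in> X"
    and ok: "r2_same_ok alpha beta s p d1 p' r d2 r'"
  shows "p = p' \<and> r = r'"
proof (cases s)
  case True
  with ok have "beta d1 r = beta d1 r'" "p = alpha r d1" "p' = alpha r' d1"
    unfolding r2_same_ok_def crossing_ok_def by auto
  with assms show ?thesis using beta_inj[of d1 r r'] by simp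
next
  case False
  with ok have "alpha d2 p = alpha d2 p'" "r = beta p d2" "r' = beta p' d2"
    unfolding r2_same_ok_def crossing_ok_def by auto
  with assms show ?thesis using alpha_inj[of d2 p p'] by simp
qed

lemma r2_same_ok_exists:
  assumes "p \<in> X" "r \<in> X"
  shows "\<exists>d1\<in>X. \<exists>d2\<in>X. r2_same_ok alpha beta s p d1 p r d2 r"
proof (cases s)
  case True
  obtain d1 where "d1 \<in> X" "alpha r d1 = p" using alpha_surj assms by blast
  with True show ?thesis using beta_closed[of d1 r] assms unfolding r2_same_ok_def crossing_ok_def by auto
next
  case False
  obtain d2 where "d2 \<in> X" "beta p d2 = r" using beta_surj assms by blast
  with False show ?thesis using alpha_closed[of d2 p] assms unfolding r2_same_ok_def crossing_ok_def by auto
qed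

lemma r2_same_ok_unique:
  assumes "p \<in> X" "r \<in> X" "d1 \<in> X" "d2 \<in> X" "d1' \<in> X" "d2' \<in> X"
    and ok: "r2_same_ok alpha beta s p d1 p r d2 r" "r2_same_ok alpha beta s p d1' p r d2' r"
  shows "d1 = d1' \<and> d2 = d2'"
proof (cases s)
  case True
  with ok have "alpha r d1 = alpha r d1'" "d2 = beta d1 r" "d2' = beta d1' r"
    unfolding r2_same_ok_def crossing_ok_def by auto
  with assms show ?thesis using alpha_inj[of r d1 d1'] by simp
next
  case False
  with ok have "beta p d2 = beta p d2'" "d1 = alpha d2 p" "d1' = alpha d2' p"
    unfolding r2_same_ok_def crossing_ok_def by auto
  with assms show ?thesis using beta_inj[of p d2 d2'] by simp
qed

lemma r2_opp_ok_ends_eq: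
  assumes "p \<in> X" "d1 \<in> X" "p' \<in> X" "r \<in> X" "d2 \<in> X" "r' \<in> X"
    and ok: "r2_opp_ok alpha beta s p d1 p' r d2 r'"
  shows "p = p' \<and> r = r'"
proof (cases s)
  case False
  with ok have "alpha r' p = alpha r p'" "beta p r' = beta p' r"
    unfolding r2_opp_ok_def crossing_ok_def by auto
  with assms show ?thesis using switch_inj[of r' p r p'] by blast
qed (use ok in \<open>auto simp: r2_opp_ok_def crossing_ok_def\<close>)

lemma r2_opp_ok_exists:
  assumes "p \<in> X" "r \<in> X"
  shows "\<exists>d1\<in>X. \<exists>d2\<in>X. r2_opp_ok alpha beta s p d1 p r d2 r"
proof (cases s)
  case True
  obtain d2 d1 where "d2 \<in> X" "d1 \<in> X" "alpha d2 d1 = p" "beta d1 d2 = r" using switch_surj assms by blast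
  with True show ?thesis unfolding r2_opp_ok_def crossing_ok_def by auto
next
  case False
  then show ?thesis using alpha_closed[of r p] beta_closed[of p r] assms
    unfolding r2_opp_ok_def crossing_ok_def by auto
qed

lemma r2_opp_ok_unique:
  assumes "d1 \<in> X" "d2 \<in> X" "d1' \<in> X" "d2' \<in> X"
    and ok: "r2_opp_ok alpha beta s p d1 p r d2 r" "r2_opp_ok alpha beta s p d1' p r d2' r"
  shows "d1 = d1' \<and> d2 = d2'"
proof (cases s)
  case True
  with ok have "alpha d2 d1 = alpha d2' d1'" "beta d1 d2 = beta d1' d2'"
    unfolding r2_opp_ok_def crossing_ok_def by auto
  with assms show ?thesis using switch_inj[of d2 d1 d2' d1'] by blast
qed (use ok in \<open>auto simp: r2_opp_ok_def crossing_ok_def\<close>)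

end

definition delete_pairs :: "nat \<Rightarrow> nat \<Rightarrow> 'a list \<Rightarrow> 'a list" where
  "delete_pairs n m cs = take n cs @ take m (drop (n + 2) cs) @ drop (m + 2) (drop (n + 2) cs)"

lemma delete_pairs_append:
  "length C1 = n \<Longrightarrow> length C2 = m \<Longrightarrow> delete_pairs n m (C1 @ e1 # d1 # C2 @ e2 # d2 # R) = C1 @ C2 @ R"
  by (simp add: delete_pairs_def)

text \<open>Both variants of R2 are instances: two blocks of two letters are deleted, and ok is the local
  condition on the colors before, inside and after them.\<close>

locale two_block_move = finite_biquandle +
  fixes b1 b2 :: "letter list" and ok :: "'a \<Rightarrow> 'a \<Rightarrow> 'a \<Rightarrow> 'a \<Rightarrow> 'a \<Rightarrow> 'a \<Rightarrow> bool"
  assumes length_blocks: "length b1 = 2" "length b2 = 2"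
    and consistent_blocks: "\<And>p d1 p' r d2 r'.
      consistent alpha beta (set (annotate b1 [p, d1, p']) \<union> set (annotate b2 [r, d2, r'])) \<longleftrightarrow> ok p d1 p' r d2 r'"
    and ok_ends_eq: "\<And>p d1 p' r d2 r'. \<lbrakk>p \<in> X; d1 \<in> X; p' \<in> X; r \<in> X; d2 \<in> X; r' \<in> X; ok p d1 p' r d2 r'\<rbrakk>
      \<Longrightarrow> p = p' \<and> r = r'"
    and ok_exists: "\<And>p r. \<lbrakk>p \<in> X; r \<in> X\<rbrakk> \<Longrightarrow> \<exists>d1\<in>X. \<exists>d2\<in>X. ok p d1 p r d2 r"
    and ok_unique: "\<And>p r d1 d2 d1' d2'. \<lbrakk>p \<in> X; r \<in> X; d1 \<in> X; d2 \<in> X; d1' \<in> X; d2' \<in> X;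
      ok p d1 p r d2 r; ok p d1' p r d2' r\<rbrakk> \<Longrightarrow> d1 = d1' \<and> d2 = d2'"
begin

lemma color_lists_R2_iff:
  assumes lab: "fst ` set (b1 @ b2) \<inter> fst ` set (u @ v @ x) = {}"
    and len: "length C1 = length u" "length C2 = length v" "length R = Suc (length x)"
  shows "C1 @ e1 # d1 # C2 @ e2 # d2 # R \<in> color_lists X alpha beta (u @ b1 @ v @ b2 @ x) p q \<longleftrightarrow>
    C1 @ C2 @ R \<in> color_lists X alpha beta (u @ v @ x) p q \<and> e1 = hd (C2 @ R) \<and> e2 = hd R \<and>
    d1 \<in> X \<and> d2 \<in> X \<and> ok e1 d1 e1 e2 d2 e2"
    (is "?cs \<in> ?A \<longleftrightarrow> ?cs' \<in> ?B \<and> _")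
proof -
  have R: "R \<noteq> []" using len by auto
  let ?f1 = "hd (C2 @ [e2])"
  let ?out = "set (annotate u (C1 @ [e1])) \<union> set (annotate v (C2 @ [e2])) \<union> set (annotate x R)"
  let ?loc = "set (annotate b1 [e1, d1, ?f1]) \<union> set (annotate b2 [e2, d2, hd R])"
  have set_cs: "set (annotate (u @ b1 @ v @ b2 @ x) ?cs) = ?out \<union> ?loc"
    using len R length_blocks by (auto simp: annotate_append annotate_Cons2 hd_append)
  have union: "consistent alpha beta (?out \<union> ?loc) \<longleftrightarrow> consistent alpha beta ?out \<and> consistent alpha beta ?loc"
  proof (rule consistent_Un)
    fix y z assume "y \<in> ?out" "z \<in> ?loc"
    then have "fst (fst y) \<in> fst ` set (u @ v @ x)" "fst (fst z) \<in> fst ` set (b1 @ b2)"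
      by (auto dest!: label_annotate)
    with lab show "fst (fst y) \<noteq> fst (fst z)" by (metis IntI emptyE)
  qed
  have split: "consistent alpha beta (set (annotate (u @ b1 @ v @ b2 @ x) ?cs)) \<longleftrightarrow>
    consistent alpha beta ?out \<and> ok e1 d1 ?f1 e2 d2 (hd R)"
    unfolding set_cs union consistent_blocks ..
  have out: "?out = set (annotate (u @ v @ x) ?cs')" if "e1 = hd (C2 @ R)" "e2 = hd R"
    using len R that by (auto simp: annotate_append hd_append)
  have f1: "?f1 = hd (C2 @ R)" if "e2 = hd R" using R that by (simp add: hd_append)
  have ends_cs: "hd ?cs = hd ?cs'" "last ?cs = last ?cs'" if "e1 = hd (C2 @ R)"
    using R that by (simp_all add: hd_append)
  show ?thesis
  proof
    assume cs: "?cs \<in> ?A"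
    then have X: "set ?cs \<subseteq> X" and cons: "consistent alpha beta (set (annotate (u @ b1 @ v @ b2 @ x) ?cs))"
      by (simp_all add: color_lists_def)
    have "?f1 \<in> X" "hd R \<in> X" using X R by (auto simp: hd_append)
    then have e: "e1 = ?f1" "e2 = hd R" using ok_ends_eq[of e1 d1 ?f1 e2 d2 "hd R"] X cons split by auto
    then have "e1 = hd (C2 @ R)" using f1 by simp
    with e cs cons show "?cs' \<in> ?B \<and> e1 = hd (C2 @ R) \<and> e2 = hd R \<and> d1 \<in> X \<and> d2 \<in> X \<and> ok e1 d1 e1 e2 d2 e2"
      using split out ends_cs len length_blocks X unfolding color_lists_def by auto
  next
    assume H: "?cs' \<in> ?B \<and> e1 = hd (C2 @ R) \<and> e2 = hd R \<and> d1 \<in> X \<and> d2 \<in> X \<and> ok e1 d1 e1 e2 d2 e2"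
    then have "set ?cs' \<subseteq> X" by (simp add: color_lists_def)
    then have "e1 \<in> X" "e2 \<in> X" using H R by (auto simp: hd_append)
    with H show "?cs \<in> ?A" using split out ends_cs f1 len length_blocks unfolding color_lists_def by auto
  qed
qed

lemma color_lists_R2_split:
  assumes "cs \<in> color_lists X alpha beta (u @ b1 @ v @ b2 @ x) p q"
  obtains C1 e1 d1 C2 e2 d2 R where "cs = C1 @ e1 # d1 # C2 @ e2 # d2 # R"
    and "length C1 = length u" "length C2 = length v" "length R = Suc (length x)"
proof -
  have "length cs = length u + 2 + (length v + 2 + Suc (length x))"
    using assms length_blocks by (simp add: color_lists_def)
  then show thesis by (elim split_list_around_pair) (auto intro: that)
qed

lemma inj_on_delete_pairs:
  assumes lab: "fst ` set (b1 @ b2) \<inter> fst ` set (u @ v @ x) = {}"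
  shows "inj_on (delete_pairs (length u) (length v)) (color_lists X alpha beta (u @ b1 @ v @ b2 @ x) p q)"
proof (rule inj_onI)
  fix cs cs' assume cs: "cs \<in> color_lists X alpha beta (u @ b1 @ v @ b2 @ x) p q"
    and cs': "cs' \<in> color_lists X alpha beta (u @ b1 @ v @ b2 @ x) p q"
    and eq: "delete_pairs (length u) (length v) cs = delete_pairs (length u) (length v) cs'"
  obtain C1 e1 d1 C2 e2 d2 R where dec: "cs = C1 @ e1 # d1 # C2 @ e2 # d2 # R"
    and len: "length C1 = length u" "length C2 = length v" "length R = Suc (length x)"
    using cs by (rule color_lists_R2_split)
  obtain C1' e1' d1' C2' e2' d2' R' where dec': "cs' = C1' @ e1' # d1' # C2' @ e2' # d2' # R'"
    and len': "length C1' = length u" "length C2' = length v" "length R' = Suc (length x)"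
    using cs' by (rule color_lists_R2_split)
  have same: "C1' = C1" "C2' = C2" "R' = R"
    using eq len len' unfolding dec dec' delete_pairs_append[OF len(1,2)] delete_pairs_append[OF len'(1,2)]
    by simp_all
  have B: "C1 @ C2 @ R \<in> color_lists X alpha beta (u @ v @ x) p q"
    and e: "e1 = hd (C2 @ R)" "e2 = hd R" "e1' = hd (C2 @ R)" "e2' = hd R"
    and d: "d1 \<in> X" "d2 \<in> X" "d1' \<in> X" "d2' \<in> X"
    and ok: "ok e1 d1 e1 e2 d2 e2" "ok e1' d1' e1' e2' d2' e2'"
    using cs cs' unfolding dec dec' same color_lists_R2_iff[OF lab len] by auto
  have "R \<noteq> []" using len(3) by auto
  then have "hd (C2 @ R) \<in> X" "hd R \<in> X" using B by (auto simp: color_lists_def hd_append)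
  then have "d1 = d1' \<and> d2 = d2'" using ok_unique d ok unfolding e by blast
  then show "cs = cs'" unfolding dec dec' same e by simp
qed

lemma delete_pairs_image:
  assumes lab: "fst ` set (b1 @ b2) \<inter> fst ` set (u @ v @ x) = {}"
  shows "delete_pairs (length u) (length v) ` color_lists X alpha beta (u @ b1 @ v @ b2 @ x) p q =
    color_lists X alpha beta (u @ v @ x) p q"
    (is "?forget ` ?A = ?B")
proof (intro equalityI subsetI)
  fix cs' assume "cs' \<in> ?forget ` ?A"
  then obtain cs where cs: "cs \<in> ?A" and cs': "cs' = ?forget cs" by blast
  obtain C1 e1 d1 C2 e2 d2 R where dec: "cs = C1 @ e1 # d1 # C2 @ e2 # d2 # R"
    and len: "length C1 = length u" "length C2 = length v" "length R = Suc (length x)"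
    using cs by (rule color_lists_R2_split)
  show "cs' \<in> ?B" using cs color_lists_R2_iff[OF lab len] unfolding cs' dec delete_pairs_append[OF len(1,2)] by blast
next
  fix cs' assume cs': "cs' \<in> ?B"
  then have "length cs' = length u + (length v + Suc (length x))" by (simp add: color_lists_def)
  then obtain C1 C2 R where dec: "cs' = C1 @ C2 @ R"
    and len: "length C1 = length u" "length C2 = length v" "length R = Suc (length x)"
    by (elim split_list_at) auto
  have "R \<noteq> []" using len(3) by auto
  then have "hd (C2 @ R) \<in> X" "hd R \<in> X"
    using cs' unfolding dec by (auto simp: color_lists_def hd_append)
  then obtain d1 d2 where "d1 \<in> X" "d2 \<in> X" "ok (hd (C2 @ R)) d1 (hd (C2 @ R)) (hd R) d2 (hd R)"
    using ok_exists by blast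
  then have "C1 @ hd (C2 @ R) # d1 # C2 @ hd R # d2 # R \<in> ?A"
    using cs' color_lists_R2_iff[OF lab len] unfolding dec by simp
  then have "?forget (C1 @ hd (C2 @ R) # d1 # C2 @ hd R # d2 # R) \<in> ?forget ` ?A" by (rule imageI)
  then show "cs' \<in> ?forget ` ?A" unfolding dec delete_pairs_append[OF len(1,2)] .
qed

lemma card_color_lists_R2:
  "fst ` set (b1 @ b2) \<inter> fst ` set (u @ v @ x) = {} \<Longrightarrow>
    card (color_lists X alpha beta (u @ b1 @ v @ b2 @ x) p q) = card (color_lists X alpha beta (u @ v @ x) p q)"
  using card_image[OF inj_on_delete_pairs] delete_pairs_image by metis

end

context finite_biquandle
begin

lemma two_block_move_R2_same:
  assumes ab: "a \<noteq> b"
  shows "two_block_move X alpha beta [(a, ov, s), (b, ov, \<not> s)] [(a, \<not> ov, s), (b, \<not> ov, \<not> s)]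
    (\<lambda>p d1 p' r d2 r'. if ov then r2_same_ok alpha beta s p d1 p' r d2 r' else r2_same_ok alpha beta s r d2 r' p d1 p')"
proof unfold_locales
  fix p d1 p' r d2 r'
  show "consistent alpha beta (set (annotate [(a, ov, s), (b, ov, \<not> s)] [p, d1, p']) \<union>
      set (annotate [(a, \<not> ov, s), (b, \<not> ov, \<not> s)] [r, d2, r'])) \<longleftrightarrow>
    (if ov then r2_same_ok alpha beta s p d1 p' r d2 r' else r2_same_ok alpha beta s r d2 r' p d1 p')"
    by (rule consistent_R2_same[OF ab])
next
  fix p d1 p' r d2 r'
  assume "p \<in> X" "d1 \<in> X" "p' \<in> X" "r \<in> X" "d2 \<in> X" "r' \<in> X"
    "if ov then r2_same_ok alpha beta s p d1 p' r d2 r' else r2_same_ok alpha beta s r d2 r' p d1 p'"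
  then show "p = p' \<and> r = r'" using r2_same_ok_ends_eq by (cases ov) auto
next
  fix p r assume "p \<in> X" "r \<in> X"
  then show "\<exists>d1\<in>X. \<exists>d2\<in>X.
      if ov then r2_same_ok alpha beta s p d1 p r d2 r else r2_same_ok alpha beta s r d2 r p d1 p"
    using r2_same_ok_exists[of p r s] r2_same_ok_exists[of r p s] by (cases ov) (simp_all, blast+)
next
  fix p r d1 d2 d1' d2'
  assume "p \<in> X" "r \<in> X" "d1 \<in> X" "d2 \<in> X" "d1' \<in> X" "d2' \<in> X"
    "if ov then r2_same_ok alpha beta s p d1 p r d2 r else r2_same_ok alpha beta s r d2 r p d1 p"
    "if ov then r2_same_ok alpha beta s p d1' p r d2' r else r2_same_ok alpha beta s r d2' r p d1' p"
  then show "d1 = d1' \<and> d2 = d2'" using r2_same_ok_unique by (cases ov) auto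
qed (simp_all add: finite_X biquandle)

lemma two_block_move_R2_opp:
  assumes ab: "a \<noteq> b"
  shows "two_block_move X alpha beta [(a, ov, s), (b, ov, \<not> s)] [(b, \<not> ov, \<not> s), (a, \<not> ov, s)]
    (\<lambda>p d1 p' r d2 r'. if ov then r2_opp_ok alpha beta s p d1 p' r d2 r' else r2_opp_ok alpha beta (\<not> s) r d2 r' p d1 p')"
proof unfold_locales
  fix p d1 p' r d2 r'
  show "consistent alpha beta (set (annotate [(a, ov, s), (b, ov, \<not> s)] [p, d1, p']) \<union>
      set (annotate [(b, \<not> ov, \<not> s), (a, \<not> ov, s)] [r, d2, r'])) \<longleftrightarrow>
    (if ov then r2_opp_ok alpha beta s p d1 p' r d2 r' else r2_opp_ok alpha beta (\<not> s) r d2 r' p d1 p')"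
    by (rule consistent_R2_opp[OF ab])
next
  fix p d1 p' r d2 r'
  assume "p \<in> X" "d1 \<in> X" "p' \<in> X" "r \<in> X" "d2 \<in> X" "r' \<in> X"
    "if ov then r2_opp_ok alpha beta s p d1 p' r d2 r' else r2_opp_ok alpha beta (\<not> s) r d2 r' p d1 p'"
  then show "p = p' \<and> r = r'" using r2_opp_ok_ends_eq by (cases ov) auto
next
  fix p r assume "p \<in> X" "r \<in> X"
  then show "\<exists>d1\<in>X. \<exists>d2\<in>X.
      if ov then r2_opp_ok alpha beta s p d1 p r d2 r else r2_opp_ok alpha beta (\<not> s) r d2 r p d1 p"
    using r2_opp_ok_exists[of p r s] r2_opp_ok_exists[of r p "(\<not> s)"] by (cases ov) (simp_all, blast+)
next
  fix p r d1 d2 d1' d2'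
  assume "p \<in> X" "r \<in> X" "d1 \<in> X" "d2 \<in> X" "d1' \<in> X" "d2' \<in> X"
    "if ov then r2_opp_ok alpha beta s p d1 p r d2 r else r2_opp_ok alpha beta (\<not> s) r d2 r p d1 p"
    "if ov then r2_opp_ok alpha beta s p d1' p r d2' r else r2_opp_ok alpha beta (\<not> s) r d2' r p d1' p"
  then show "d1 = d1' \<and> d2 = d2'" using r2_opp_ok_unique by (cases ov) auto
qed (simp_all add: finite_X biquandle)

end

section \<open>Reidemeister move III\<close>

text \<open>t0 t1 t2, m0 m1 m2 and b0 b1 b2 are the colors along the top, middle and bottom strand in the
  direction of traversal; the crossings are x (top over middle), y (top over bottom) and z (middle over
  bottom), as in r3_seg.\<close>

definition r3_colors_ok :: "('a \<Rightarrow> 'a \<Rightarrow> 'a) \<Rightarrow> ('a \<Rightarrow> 'a \<Rightarrow> 'a) \<Rightarrow> bool \<Rightarrow> bool \<Rightarrow> bool \<Rightarrow>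
    bool \<Rightarrow> bool \<Rightarrow> bool \<Rightarrow> 'a \<Rightarrow> 'a \<Rightarrow> 'a \<Rightarrow> 'a \<Rightarrow> 'a \<Rightarrow> 'a \<Rightarrow> 'a \<Rightarrow> 'a \<Rightarrow> 'a \<Rightarrow> bool" where
  "r3_colors_ok alpha beta sx sy sz oT oM oB t0 t1 t2 m0 m1 m2 b0 b1 b2 \<longleftrightarrow>
     crossing_ok alpha beta sx (if oT then t0 else t1) (if oT then t1 else t2)
       (if oM then m0 else m1) (if oM then m1 else m2) \<and>
     crossing_ok alpha beta sy (if oT then t1 else t0) (if oT then t2 else t1)
       (if oB then b0 else b1) (if oB then b1 else b2) \<and>
     crossing_ok alpha beta sz (if oM then m1 else m0) (if oM then m2 else m1)
       (if oB then b1 else b0) (if oB then b2 else b1)"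

lemma crossing_ok_Not: "crossing_ok alpha beta (\<not> s) a b c d \<longleftrightarrow> crossing_ok alpha beta s b a d c"
  by (cases s) (auto simp: crossing_ok_def)

lemma r3_colors_ok_reverse:
  "r3_colors_ok alpha beta (\<not> sx) (\<not> sy) (\<not> sz) oT oM oB t0 t1 t2 m0 m1 m2 b0 b1 b2 \<longleftrightarrow>
   r3_colors_ok alpha beta sx sy sz (\<not> oT) (\<not> oM) (\<not> oB) t2 t1 t0 m2 m1 m0 b2 b1 b0"
  unfolding r3_colors_ok_def crossing_ok_Not by (cases oT; cases oM; cases oB) simp_all

context finite_biquandle
begin

text \<open>The eight configurations with a positive crossing x allowed by r3_ok; the suffix lists the signs of
  x, y, z and the flags oT, oM, oB.\<close>

lemma r3_exists_ppp_TTT: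
  assumes h: "r3_colors_ok alpha beta True True True True True True t0 t1 t2 m0 m1 m2 b0 b1 b2"
    and X: "t0 \<in> X" "t2 \<in> X" "m0 \<in> X" "m2 \<in> X" "b0 \<in> X" "b2 \<in> X" "t1 \<in> X" "m1 \<in> X" "b1 \<in> X"
  shows "\<exists>T\<in>X. \<exists>M\<in>X. \<exists>B\<in>X. r3_colors_ok alpha beta True True True False False False t0 T t2 m0 M m2 b0 B b2"
proof -
  have e: "m1 = beta t1 m0" "t0 = alpha m0 t1" "b1 = beta t2 b0" "t1 = alpha b0 t2" "b2 = beta m2 b1" "m1 = alpha b1 m2"
    using h unfolding r3_colors_ok_def crossing_ok_def if_True if_False by blast+
  obtain M where M: "M \<in> X" "beta t2 M = m2" using beta_surj X by blast
  define T where "T = alpha M t2"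
  define B where "B = beta M b0"
  have "beta t1 (alpha b0 M) = beta t1 m0"
    using beta_alpha[of b0 t2 M] X e M by simp
  then have 1: "m0 = alpha b0 M" using beta_inj[of t1 "alpha b0 M" m0] X M alpha_closed by simp
  have 2: "t0 = alpha B T"
    using alpha_alpha[of b0 M t2] X e M 1 unfolding T_def B_def by simp
  have 3: "b2 = beta T B"
    using beta_beta[of t2 M b0] X e M unfolding T_def B_def by simp
  have "T \<in> X" "B \<in> X" unfolding T_def B_def using X M alpha_closed beta_closed by auto
  then show ?thesis using 1 2 3 T_def B_def M
    unfolding r3_colors_ok_def crossing_ok_def if_True if_False by blast
qed

lemma r3_unique_ppp_TTT:
  assumes h: "r3_colors_ok alpha beta True True True True True True t0 t1 t2 m0 m1 m2 b0 b1 b2"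
    and h': "r3_colors_ok alpha beta True True True True True True t0 t1' t2 m0 m1' m2 b0 b1' b2"
    and X: "t0 \<in> X" "t2 \<in> X" "m0 \<in> X" "m2 \<in> X" "b0 \<in> X" "b2 \<in> X" "t1 \<in> X" "m1 \<in> X" "b1 \<in> X" "t1' \<in> X" "m1' \<in> X" "b1' \<in> X"
  shows "t1 = t1' \<and> m1 = m1' \<and> b1 = b1'"
proof -
  have e: "m1 = beta t1 m0" "t0 = alpha m0 t1" "b1 = beta t2 b0" "t1 = alpha b0 t2" "b2 = beta m2 b1" "m1 = alpha b1 m2"
    using h unfolding r3_colors_ok_def crossing_ok_def if_True if_False by blast+
  have e': "m1' = beta t1' m0" "t0 = alpha m0 t1'" "b1' = beta t2 b0" "t1' = alpha b0 t2" "b2 = beta m2 b1'" "m1' = alpha b1' m2"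
    using h' unfolding r3_colors_ok_def crossing_ok_def if_True if_False by blast+
  show ?thesis using e(4,3,6) e'(4,3,6) by simp
qed

lemma r3_exists_ppp_FFF:
  assumes h: "r3_colors_ok alpha beta True True True False False False t0 t1 t2 m0 m1 m2 b0 b1 b2"
    and X: "t0 \<in> X" "t2 \<in> X" "m0 \<in> X" "m2 \<in> X" "b0 \<in> X" "b2 \<in> X" "t1 \<in> X" "m1 \<in> X" "b1 \<in> X"
  shows "\<exists>T\<in>X. \<exists>M\<in>X. \<exists>B\<in>X. r3_colors_ok alpha beta True True True True True True t0 T t2 m0 M m2 b0 B b2"
proof -
  have e: "m2 = beta t2 m1" "t1 = alpha m1 t2" "b2 = beta t1 b1" "t0 = alpha b1 t1" "b1 = beta m1 b0" "m0 = alpha b0 m1"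
    using h unfolding r3_colors_ok_def crossing_ok_def if_True if_False by blast+
  define T where "T = alpha b0 t2"
  define B where "B = beta t2 b0"
  define M where "M = alpha B m2"
  have 1: "M = beta T m0"
    using beta_alpha[of b0 t2 m1] X e unfolding T_def M_def B_def by simp
  have 2: "t0 = alpha m0 T"
    using alpha_alpha[of b0 m1 t2] X e unfolding T_def by simp
  have 3: "b2 = beta m2 B"
    using beta_beta[of t2 m1 b0] X e unfolding B_def by simp
  have "T \<in> X" "B \<in> X" "M \<in> X" unfolding T_def B_def M_def using X alpha_closed beta_closed by auto
  then show ?thesis using 1 2 3 T_def B_def M_def
    unfolding r3_colors_ok_def crossing_ok_def if_True if_False by blast
qed

lemma r3_unique_ppp_FFF:
  assumes h: "r3_colors_ok alpha beta True True True False False False t0 t1 t2 m0 m1 m2 b0 b1 b2"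
    and h': "r3_colors_ok alpha beta True True True False False False t0 t1' t2 m0 m1' m2 b0 b1' b2"
    and X: "t0 \<in> X" "t2 \<in> X" "m0 \<in> X" "m2 \<in> X" "b0 \<in> X" "b2 \<in> X" "t1 \<in> X" "m1 \<in> X" "b1 \<in> X" "t1' \<in> X" "m1' \<in> X" "b1' \<in> X"
  shows "t1 = t1' \<and> m1 = m1' \<and> b1 = b1'"
proof -
  have e: "m2 = beta t2 m1" "t1 = alpha m1 t2" "b2 = beta t1 b1" "t0 = alpha b1 t1" "b1 = beta m1 b0" "m0 = alpha b0 m1"
    using h unfolding r3_colors_ok_def crossing_ok_def if_True if_False by blast+
  have e': "m2 = beta t2 m1'" "t1' = alpha m1' t2" "b2 = beta t1' b1'" "t0 = alpha b1' t1'" "b1' = beta m1' b0" "m0 = alpha b0 m1'"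
    using h' unfolding r3_colors_ok_def crossing_ok_def if_True if_False by blast+
  have "beta t2 m1 = beta t2 m1'" using e(1) e'(1) by simp
  then have m: "m1 = m1'" using beta_inj[OF X(2) X(8) X(11)] by blast
  show ?thesis using m e(2,5) e'(2,5) by simp
qed

lemma r3_exists_ppn_FTT:
  assumes h: "r3_colors_ok alpha beta True True False False True True t0 t1 t2 m0 m1 m2 b0 b1 b2"
    and X: "t0 \<in> X" "t2 \<in> X" "m0 \<in> X" "m2 \<in> X" "b0 \<in> X" "b2 \<in> X" "t1 \<in> X" "m1 \<in> X" "b1 \<in> X"
  shows "\<exists>T\<in>X. \<exists>M\<in>X. \<exists>B\<in>X. r3_colors_ok alpha beta True True False True False False t0 T t2 m0 M m2 b0 B b2"
proof -
  have e: "m1 = beta t2 m0" "t1 = alpha m0 t2" "b1 = beta t1 b0" "t0 = alpha b0 t1" "b1 = beta m1 b2" "m2 = alpha b2 m1"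
    using h unfolding r3_colors_ok_def crossing_ok_def if_True if_False by blast+
  obtain B where B: "B \<in> X" "beta m0 B = b0" using beta_surj X by blast
  define T where "T = alpha B t2"
  define M where "M = alpha B m0"
  have "beta m1 (beta t2 B) = beta m1 b2"
    using beta_beta[of t2 m0 B] X e B by simp
  then have 1: "b2 = beta t2 B" using beta_inj[of m1 "beta t2 B" b2] X B beta_closed by simp
  have 2: "m2 = beta T M"
    using beta_alpha[of B t2 m0] X e B 1 unfolding T_def M_def by simp
  have 3: "t0 = alpha M T"
    using alpha_alpha[of B m0 t2] X e B unfolding T_def M_def by simp
  have "T \<in> X" "M \<in> X" unfolding T_def M_def using X B alpha_closed beta_closed by auto
  then show ?thesis using 1 2 3 T_def M_def B
    unfolding r3_colors_ok_def crossing_ok_def if_True if_False by blast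
qed

lemma r3_unique_ppn_FTT:
  assumes h: "r3_colors_ok alpha beta True True False False True True t0 t1 t2 m0 m1 m2 b0 b1 b2"
    and h': "r3_colors_ok alpha beta True True False False True True t0 t1' t2 m0 m1' m2 b0 b1' b2"
    and X: "t0 \<in> X" "t2 \<in> X" "m0 \<in> X" "m2 \<in> X" "b0 \<in> X" "b2 \<in> X" "t1 \<in> X" "m1 \<in> X" "b1 \<in> X" "t1' \<in> X" "m1' \<in> X" "b1' \<in> X"
  shows "t1 = t1' \<and> m1 = m1' \<and> b1 = b1'"
proof -
  have e: "m1 = beta t2 m0" "t1 = alpha m0 t2" "b1 = beta t1 b0" "t0 = alpha b0 t1" "b1 = beta m1 b2" "m2 = alpha b2 m1"
    using h unfolding r3_colors_ok_def crossing_ok_def if_True if_False by blast+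
  have e': "m1' = beta t2 m0" "t1' = alpha m0 t2" "b1' = beta t1' b0" "t0 = alpha b0 t1'" "b1' = beta m1' b2" "m2 = alpha b2 m1'"
    using h' unfolding r3_colors_ok_def crossing_ok_def if_True if_False by blast+
  show ?thesis using e(2,1,3) e'(2,1,3) by simp
qed

lemma r3_exists_ppn_TFF:
  assumes h: "r3_colors_ok alpha beta True True False True False False t0 t1 t2 m0 m1 m2 b0 b1 b2"
    and X: "t0 \<in> X" "t2 \<in> X" "m0 \<in> X" "m2 \<in> X" "b0 \<in> X" "b2 \<in> X" "t1 \<in> X" "m1 \<in> X" "b1 \<in> X"
  shows "\<exists>T\<in>X. \<exists>M\<in>X. \<exists>B\<in>X. r3_colors_ok alpha beta True True False False True True t0 T t2 m0 M m2 b0 B b2"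
proof -
  have e: "m2 = beta t1 m1" "t0 = alpha m1 t1" "b2 = beta t2 b1" "t1 = alpha b1 t2" "b0 = beta m0 b1" "m1 = alpha b1 m0"
    using h unfolding r3_colors_ok_def crossing_ok_def if_True if_False by blast+
  define T where "T = alpha m0 t2"
  define M where "M = beta t2 m0"
  define B where "B = beta T b0"
  have 1: "t0 = alpha b0 T"
    using alpha_alpha[of b1 m0 t2] X e unfolding T_def by simp
  have 2: "B = beta M b2"
    using beta_beta[of t2 m0 b1] X e unfolding T_def M_def B_def by simp
  have 3: "m2 = alpha b2 M"
    using beta_alpha[of b1 t2 m0] X e unfolding M_def by simp
  have "T \<in> X" "M \<in> X" "B \<in> X" unfolding T_def B_def M_def using X alpha_closed beta_closed by auto
  then show ?thesis using 1 2 3 T_def B_def M_def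
    unfolding r3_colors_ok_def crossing_ok_def if_True if_False by blast
qed

lemma r3_unique_ppn_TFF:
  assumes h: "r3_colors_ok alpha beta True True False True False False t0 t1 t2 m0 m1 m2 b0 b1 b2"
    and h': "r3_colors_ok alpha beta True True False True False False t0 t1' t2 m0 m1' m2 b0 b1' b2"
    and X: "t0 \<in> X" "t2 \<in> X" "m0 \<in> X" "m2 \<in> X" "b0 \<in> X" "b2 \<in> X" "t1 \<in> X" "m1 \<in> X" "b1 \<in> X" "t1' \<in> X" "m1' \<in> X" "b1' \<in> X"
  shows "t1 = t1' \<and> m1 = m1' \<and> b1 = b1'"
proof -
  have e: "m2 = beta t1 m1" "t0 = alpha m1 t1" "b2 = beta t2 b1" "t1 = alpha b1 t2" "b0 = beta m0 b1" "m1 = alpha b1 m0"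
    using h unfolding r3_colors_ok_def crossing_ok_def if_True if_False by blast+
  have e': "m2 = beta t1' m1'" "t0 = alpha m1' t1'" "b2 = beta t2 b1'" "t1' = alpha b1' t2" "b0 = beta m0 b1'" "m1' = alpha b1' m0"
    using h' unfolding r3_colors_ok_def crossing_ok_def if_True if_False by blast+
  have "alpha m1 t1 = alpha m1' t1'" "beta t1 m1 = beta t1' m1'" using e(1,2) e'(1,2) by simp_all
  then have tm: "m1 = m1' \<and> t1 = t1'" using switch_inj[OF X(8) X(7) X(11) X(10)] by blast
  have "beta m0 b1 = beta m0 b1'" using e(5) e'(5) by simp
  then have b: "b1 = b1'" using beta_inj[OF X(3) X(9) X(12)] by blast
  show ?thesis using tm b by simp
qed

lemma r3_exists_pnp_TFT:
  assumes h: "r3_colors_ok alpha beta True False True True False True t0 t1 t2 m0 m1 m2 b0 b1 b2"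
    and X: "t0 \<in> X" "t2 \<in> X" "m0 \<in> X" "m2 \<in> X" "b0 \<in> X" "b2 \<in> X" "t1 \<in> X" "m1 \<in> X" "b1 \<in> X"
  shows "\<exists>T\<in>X. \<exists>M\<in>X. \<exists>B\<in>X. r3_colors_ok alpha beta True False True False True False t0 T t2 m0 M m2 b0 B b2"
proof -
  have e: "m2 = beta t1 m1" "t0 = alpha m1 t1" "b0 = beta t1 b1" "t2 = alpha b1 t1" "b2 = beta m1 b1" "m0 = alpha b1 m1"
    using h unfolding r3_colors_ok_def crossing_ok_def if_True if_False by blast+
  define T where "T = alpha m0 t2"
  define M where "M = beta t2 m0"
  define B where "B = beta m2 b0"
  have 1: "T = alpha b2 t0"
    using alpha_alpha[of b1 m1 t1] X e unfolding T_def by simp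
  have 2: "M = alpha b0 m2"
    using beta_alpha[of b1 t1 m1] X e unfolding M_def by simp
  have 3: "B = beta t0 b2"
    using beta_beta[of t1 m1 b1] X e unfolding B_def by simp
  have "T \<in> X" "M \<in> X" "B \<in> X" unfolding T_def B_def M_def using X alpha_closed beta_closed by auto
  then show ?thesis using 1 2 3 T_def B_def M_def
    unfolding r3_colors_ok_def crossing_ok_def if_True if_False by blast
qed

lemma r3_unique_pnp_TFT:
  assumes h: "r3_colors_ok alpha beta True False True True False True t0 t1 t2 m0 m1 m2 b0 b1 b2"
    and h': "r3_colors_ok alpha beta True False True True False True t0 t1' t2 m0 m1' m2 b0 b1' b2"
    and X: "t0 \<in> X" "t2 \<in> X" "m0 \<in> X" "m2 \<in> X" "b0 \<in> X" "b2 \<in> X" "t1 \<in> X" "m1 \<in> X" "b1 \<in> X" "t1' \<in> X" "m1' \<in> X" "b1' \<in> X"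
  shows "t1 = t1' \<and> m1 = m1' \<and> b1 = b1'"
proof -
  have e: "m2 = beta t1 m1" "t0 = alpha m1 t1" "b0 = beta t1 b1" "t2 = alpha b1 t1" "b2 = beta m1 b1" "m0 = alpha b1 m1"
    using h unfolding r3_colors_ok_def crossing_ok_def if_True if_False by blast+
  have e': "m2 = beta t1' m1'" "t0 = alpha m1' t1'" "b0 = beta t1' b1'" "t2 = alpha b1' t1'" "b2 = beta m1' b1'" "m0 = alpha b1' m1'"
    using h' unfolding r3_colors_ok_def crossing_ok_def if_True if_False by blast+
  have "alpha m1 t1 = alpha m1' t1'" "beta t1 m1 = beta t1' m1'" using e(1,2) e'(1,2) by simp_all
  then have tm: "m1 = m1' \<and> t1 = t1'" using switch_inj[OF X(8) X(7) X(11) X(10)] by blast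
  have "beta t1 b1 = beta t1 b1'" using e(3) e'(3) tm by simp
  then have b: "b1 = b1'" using beta_inj[OF X(7) X(9) X(12)] by blast
  show ?thesis using tm b by simp
qed

lemma r3_exists_pnp_FTF:
  assumes h: "r3_colors_ok alpha beta True False True False True False t0 t1 t2 m0 m1 m2 b0 b1 b2"
    and X: "t0 \<in> X" "t2 \<in> X" "m0 \<in> X" "m2 \<in> X" "b0 \<in> X" "b2 \<in> X" "t1 \<in> X" "m1 \<in> X" "b1 \<in> X"
  shows "\<exists>T\<in>X. \<exists>M\<in>X. \<exists>B\<in>X. r3_colors_ok alpha beta True False True True False True t0 T t2 m0 M m2 b0 B b2"
proof -
  have e: "m1 = beta t2 m0" "t1 = alpha m0 t2" "b1 = beta t0 b2" "t1 = alpha b2 t0" "b1 = beta m2 b0" "m1 = alpha b0 m2"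
    using h unfolding r3_colors_ok_def crossing_ok_def if_True if_False by blast+
  obtain B M where BM: "B \<in> X" "M \<in> X" "alpha B M = m0" "beta M B = b2" using switch_surj X by blast
  obtain T where T: "T \<in> X" "alpha M T = t0" using alpha_surj X BM by blast
  have "alpha m0 (alpha B T) = alpha m0 t2"
    using alpha_alpha[of B M T] X e BM T by simp
  then have 1: "t2 = alpha B T" using alpha_inj[of m0 "alpha B T" t2] X BM T alpha_closed by simp
  have m1: "m1 = alpha (beta T B) (beta T M)"
    using beta_alpha[of B T M] X e BM T 1 by simp
  have b1: "b1 = beta (beta T M) (beta T B)"
    using beta_beta[of T M B] X e BM T by simp
  have "b0 = beta T B \<and> m2 = beta T M"
    using switch_inj[of b0 m2 "beta T B" "beta T M"] X BM T beta_closed m1 b1 e by simp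
  then show ?thesis using 1 BM T
    unfolding r3_colors_ok_def crossing_ok_def if_True if_False by blast
qed

lemma r3_unique_pnp_FTF:
  assumes h: "r3_colors_ok alpha beta True False True False True False t0 t1 t2 m0 m1 m2 b0 b1 b2"
    and h': "r3_colors_ok alpha beta True False True False True False t0 t1' t2 m0 m1' m2 b0 b1' b2"
    and X: "t0 \<in> X" "t2 \<in> X" "m0 \<in> X" "m2 \<in> X" "b0 \<in> X" "b2 \<in> X" "t1 \<in> X" "m1 \<in> X" "b1 \<in> X" "t1' \<in> X" "m1' \<in> X" "b1' \<in> X"
  shows "t1 = t1' \<and> m1 = m1' \<and> b1 = b1'"
proof -
  have e: "m1 = beta t2 m0" "t1 = alpha m0 t2" "b1 = beta t0 b2" "t1 = alpha b2 t0" "b1 = beta m2 b0" "m1 = alpha b0 m2"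
    using h unfolding r3_colors_ok_def crossing_ok_def if_True if_False by blast+
  have e': "m1' = beta t2 m0" "t1' = alpha m0 t2" "b1' = beta t0 b2" "t1' = alpha b2 t0" "b1' = beta m2 b0" "m1' = alpha b0 m2"
    using h' unfolding r3_colors_ok_def crossing_ok_def if_True if_False by blast+
  show ?thesis using e(2,1,5) e'(2,1,5) by simp
qed

lemma r3_exists_pnn_FFT:
  assumes h: "r3_colors_ok alpha beta True False False False False True t0 t1 t2 m0 m1 m2 b0 b1 b2"
    and X: "t0 \<in> X" "t2 \<in> X" "m0 \<in> X" "m2 \<in> X" "b0 \<in> X" "b2 \<in> X" "t1 \<in> X" "m1 \<in> X" "b1 \<in> X"
  shows "\<exists>T\<in>X. \<exists>M\<in>X. \<exists>B\<in>X. r3_colors_ok alpha beta True False False True True False t0 T t2 m0 M m2 b0 B b2"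
proof -
  have e: "m2 = beta t2 m1" "t1 = alpha m1 t2" "b0 = beta t0 b1" "t1 = alpha b1 t0" "b1 = beta m0 b2" "m1 = alpha b2 m0"
    using h unfolding r3_colors_ok_def crossing_ok_def if_True if_False by blast+
  obtain T where T: "T \<in> X" "alpha m0 T = t0" using alpha_surj X by blast
  define M where "M = beta T m0"
  define B where "B = beta T b2"
  have "alpha m1 (alpha b2 T) = alpha m1 t2"
    using alpha_alpha[of b2 m0 T] X e T by simp
  then have 1: "t2 = alpha b2 T" using alpha_inj[of m1 "alpha b2 T" t2] X T alpha_closed by simp
  have 2: "m2 = alpha B M"
    using beta_alpha[of b2 T m0] X e T 1 unfolding M_def B_def by simp
  have 3: "b0 = beta M B"
    using beta_beta[of T m0 b2] X e T unfolding M_def B_def by simp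
  have "M \<in> X" "B \<in> X" unfolding B_def M_def using X T alpha_closed beta_closed by auto
  then show ?thesis using 1 2 3 T M_def B_def
    unfolding r3_colors_ok_def crossing_ok_def if_True if_False by blast
qed

lemma r3_unique_pnn_FFT:
  assumes h: "r3_colors_ok alpha beta True False False False False True t0 t1 t2 m0 m1 m2 b0 b1 b2"
    and h': "r3_colors_ok alpha beta True False False False False True t0 t1' t2 m0 m1' m2 b0 b1' b2"
    and X: "t0 \<in> X" "t2 \<in> X" "m0 \<in> X" "m2 \<in> X" "b0 \<in> X" "b2 \<in> X" "t1 \<in> X" "m1 \<in> X" "b1 \<in> X" "t1' \<in> X" "m1' \<in> X" "b1' \<in> X"
  shows "t1 = t1' \<and> m1 = m1' \<and> b1 = b1'"
proof -
  have e: "m2 = beta t2 m1" "t1 = alpha m1 t2" "b0 = beta t0 b1" "t1 = alpha b1 t0" "b1 = beta m0 b2" "m1 = alpha b2 m0"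
    using h unfolding r3_colors_ok_def crossing_ok_def if_True if_False by blast+
  have e': "m2 = beta t2 m1'" "t1' = alpha m1' t2" "b0 = beta t0 b1'" "t1' = alpha b1' t0" "b1' = beta m0 b2" "m1' = alpha b2 m0"
    using h' unfolding r3_colors_ok_def crossing_ok_def if_True if_False by blast+
  show ?thesis using e(5,6,2) e'(5,6,2) by simp
qed

lemma r3_exists_pnn_TTF:
  assumes h: "r3_colors_ok alpha beta True False False True True False t0 t1 t2 m0 m1 m2 b0 b1 b2"
    and X: "t0 \<in> X" "t2 \<in> X" "m0 \<in> X" "m2 \<in> X" "b0 \<in> X" "b2 \<in> X" "t1 \<in> X" "m1 \<in> X" "b1 \<in> X"
  shows "\<exists>T\<in>X. \<exists>M\<in>X. \<exists>B\<in>X. r3_colors_ok alpha beta True False False False False True t0 T t2 m0 M m2 b0 B b2"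
proof -
  have e: "m1 = beta t1 m0" "t0 = alpha m0 t1" "b1 = beta t1 b2" "t2 = alpha b2 t1" "b0 = beta m1 b1" "m2 = alpha b1 m1"
    using h unfolding r3_colors_ok_def crossing_ok_def if_True if_False by blast+
  define M where "M = alpha b2 m0"
  define B where "B = beta m0 b2"
  define T where "T = alpha M t2"
  have 1: "m2 = beta t2 M"
    using beta_alpha[of b2 t1 m0] X e unfolding M_def by simp
  have 2: "T = alpha B t0"
    using alpha_alpha[of b2 m0 t1] X e unfolding T_def M_def B_def by simp
  have 3: "b0 = beta t0 B"
    using beta_beta[of t1 m0 b2] X e unfolding B_def by simp
  have "T \<in> X" "M \<in> X" "B \<in> X" unfolding T_def B_def M_def using X alpha_closed beta_closed by auto
  then show ?thesis using 1 2 3 T_def B_def M_def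
    unfolding r3_colors_ok_def crossing_ok_def if_True if_False by blast
qed

lemma r3_unique_pnn_TTF:
  assumes h: "r3_colors_ok alpha beta True False False True True False t0 t1 t2 m0 m1 m2 b0 b1 b2"
    and h': "r3_colors_ok alpha beta True False False True True False t0 t1' t2 m0 m1' m2 b0 b1' b2"
    and X: "t0 \<in> X" "t2 \<in> X" "m0 \<in> X" "m2 \<in> X" "b0 \<in> X" "b2 \<in> X" "t1 \<in> X" "m1 \<in> X" "b1 \<in> X" "t1' \<in> X" "m1' \<in> X" "b1' \<in> X"
  shows "t1 = t1' \<and> m1 = m1' \<and> b1 = b1'"
proof -
  have e: "m1 = beta t1 m0" "t0 = alpha m0 t1" "b1 = beta t1 b2" "t2 = alpha b2 t1" "b0 = beta m1 b1" "m2 = alpha b1 m1"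
    using h unfolding r3_colors_ok_def crossing_ok_def if_True if_False by blast+
  have e': "m1' = beta t1' m0" "t0 = alpha m0 t1'" "b1' = beta t1' b2" "t2 = alpha b2 t1'" "b0 = beta m1' b1'" "m2 = alpha b1' m1'"
    using h' unfolding r3_colors_ok_def crossing_ok_def if_True if_False by blast+
  have "alpha m0 t1 = alpha m0 t1'" using e(2) e'(2) by simp
  then have t: "t1 = t1'" using alpha_inj[OF X(3) X(7) X(10)] by blast
  show ?thesis using t e(1,3) e'(1,3) by simp
qed

lemma r3_exists_pos:
  assumes ok: "r3_ok True sy sz oT oM oB"
    and h: "r3_colors_ok alpha beta True sy sz oT oM oB t0 t1 t2 m0 m1 m2 b0 b1 b2"
    and X: "t0 \<in> X" "t2 \<in> X" "m0 \<in> X" "m2 \<in> X" "b0 \<in> X" "b2 \<in> X" "t1 \<in> X" "m1 \<in> X" "b1 \<in> X"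
  shows "\<exists>T\<in>X. \<exists>M\<in>X. \<exists>B\<in>X. r3_colors_ok alpha beta True sy sz (\<not> oT) (\<not> oM) (\<not> oB) t0 T t2 m0 M m2 b0 B b2"
  using ok h r3_exists_ppp_TTT[OF _ X] r3_exists_ppp_FFF[OF _ X] r3_exists_ppn_FTT[OF _ X]
    r3_exists_ppn_TFF[OF _ X] r3_exists_pnp_TFT[OF _ X] r3_exists_pnp_FTF[OF _ X] r3_exists_pnn_FFT[OF _ X]
    r3_exists_pnn_TTF[OF _ X]
  unfolding r3_ok_def by (cases sy; cases sz; cases oT; cases oM; cases oB) simp_all

lemma r3_unique_pos:
  assumes ok: "r3_ok True sy sz oT oM oB"
    and h: "r3_colors_ok alpha beta True sy sz oT oM oB t0 t1 t2 m0 m1 m2 b0 b1 b2"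
    and h': "r3_colors_ok alpha beta True sy sz oT oM oB t0 t1' t2 m0 m1' m2 b0 b1' b2"
    and X: "t0 \<in> X" "t2 \<in> X" "m0 \<in> X" "m2 \<in> X" "b0 \<in> X" "b2 \<in> X" "t1 \<in> X" "m1 \<in> X" "b1 \<in> X"
      "t1' \<in> X" "m1' \<in> X" "b1' \<in> X"
  shows "t1 = t1' \<and> m1 = m1' \<and> b1 = b1'"
  using ok h h' r3_unique_ppp_TTT[OF _ _ X] r3_unique_ppp_FFF[OF _ _ X] r3_unique_ppn_FTT[OF _ _ X]
    r3_unique_ppn_TFF[OF _ _ X] r3_unique_pnp_TFT[OF _ _ X] r3_unique_pnp_FTF[OF _ _ X]
    r3_unique_pnn_FFT[OF _ _ X] r3_unique_pnn_TTF[OF _ _ X]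
  unfolding r3_ok_def by (cases sy; cases sz; cases oT; cases oM; cases oB) simp_all

text \<open>Reversing the orientation of all three strands reduces a negative crossing x to a positive one.\<close>

lemma r3_exists:
  assumes ok: "r3_ok sx sy sz oT oM oB"
    and h: "r3_colors_ok alpha beta sx sy sz oT oM oB t0 t1 t2 m0 m1 m2 b0 b1 b2"
    and X: "t0 \<in> X" "t2 \<in> X" "m0 \<in> X" "m2 \<in> X" "b0 \<in> X" "b2 \<in> X" "t1 \<in> X" "m1 \<in> X" "b1 \<in> X"
  shows "\<exists>T\<in>X. \<exists>M\<in>X. \<exists>B\<in>X. r3_colors_ok alpha beta sx sy sz (\<not> oT) (\<not> oM) (\<not> oB) t0 T t2 m0 M m2 b0 B b2"
proof (cases sx)
  case True
  with ok h X show ?thesis using r3_exists_pos by simp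
next
  case False
  have ok': "r3_ok True (\<not> sy) (\<not> sz) (\<not> oT) (\<not> oM) (\<not> oB)"
    using ok False unfolding r3_ok_def by auto
  have "r3_colors_ok alpha beta True (\<not> sy) (\<not> sz) (\<not> oT) (\<not> oM) (\<not> oB) t2 t1 t0 m2 m1 m0 b2 b1 b0"
    using h False r3_colors_ok_reverse[of alpha beta True "\<not> sy" "\<not> sz"] by simp
  then obtain T M B where "T \<in> X" "M \<in> X" "B \<in> X"
    "r3_colors_ok alpha beta True (\<not> sy) (\<not> sz) (\<not> \<not> oT) (\<not> \<not> oM) (\<not> \<not> oB) t2 T t0 m2 M m0 b2 B b0"
    using r3_exists_pos[OF ok'] X by blast
  then show ?thesis
    using False r3_colors_ok_reverse[of alpha beta True "\<not> sy" "\<not> sz" "\<not> oT" "\<not> oM" "\<not> oB"] by auto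
qed

lemma r3_unique:
  assumes ok: "r3_ok sx sy sz oT oM oB"
    and h: "r3_colors_ok alpha beta sx sy sz oT oM oB t0 t1 t2 m0 m1 m2 b0 b1 b2"
    and h': "r3_colors_ok alpha beta sx sy sz oT oM oB t0 t1' t2 m0 m1' m2 b0 b1' b2"
    and X: "t0 \<in> X" "t2 \<in> X" "m0 \<in> X" "m2 \<in> X" "b0 \<in> X" "b2 \<in> X" "t1 \<in> X" "m1 \<in> X" "b1 \<in> X"
      "t1' \<in> X" "m1' \<in> X" "b1' \<in> X"
  shows "t1 = t1' \<and> m1 = m1' \<and> b1 = b1'"
proof (cases sx)
  case True
  with ok h h' X show ?thesis using r3_unique_pos by simp
next
  case False
  have ok': "r3_ok True (\<not> sy) (\<not> sz) (\<not> oT) (\<not> oM) (\<not> oB)"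
    using ok False unfolding r3_ok_def by auto
  have "r3_colors_ok alpha beta True (\<not> sy) (\<not> sz) (\<not> oT) (\<not> oM) (\<not> oB) t2 t1 t0 m2 m1 m0 b2 b1 b0"
    "r3_colors_ok alpha beta True (\<not> sy) (\<not> sz) (\<not> oT) (\<not> oM) (\<not> oB) t2 t1' t0 m2 m1' m0 b2 b1' b0"
    using h h' False r3_colors_ok_reverse[of alpha beta True "\<not> sy" "\<not> sz"] by simp_all
  then show ?thesis using r3_unique_pos[OF ok'] X by blast
qed

end

text \<open>by_strand i j u1 u2 u3 n is the datum of strand n when u1, u2, u3 are the data of the strands
  traversed first (strand i), second (strand j) and third.\<close>

definition by_strand :: "nat \<Rightarrow> nat \<Rightarrow> 'b \<Rightarrow> 'b \<Rightarrow> 'b \<Rightarrow> nat \<Rightarrow> 'b" where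
  "by_strand i j u1 u2 u3 n = (if n = i then u1 else if n = j then u2 else u3)"

lemma perm3_cases:
  assumes "(i::nat) < 3" "j < 3" "k < 3" "distinct [i, j, k]"
  shows "(i = 0 \<and> j = 1 \<and> k = 2) \<or> (i = 0 \<and> j = 2 \<and> k = 1) \<or> (i = 1 \<and> j = 0 \<and> k = 2) \<or>
    (i = 1 \<and> j = 2 \<and> k = 0) \<or> (i = 2 \<and> j = 0 \<and> k = 1) \<or> (i = 2 \<and> j = 1 \<and> k = 0)"
proof -
  have "i = 0 \<or> i = 1 \<or> i = 2" "j = 0 \<or> j = 1 \<or> j = 2" "k = 0 \<or> k = 1 \<or> k = 2"
    using assms(1-3) by arith+
  with assms(4) show ?thesis by (elim disjE) simp_all
qed

lemma by_strand_at:
  "distinct [i, j, k] \<Longrightarrow> by_strand i j u1 u2 u3 i = u1 \<and> by_strand i j u1 u2 u3 j = u2 \<and> by_strand i j u1 u2 u3 k = u3"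
  unfolding by_strand_def by auto

lemma by_strand_self:
  assumes "i < 3" "j < 3" "k < 3" "distinct [i, j, k]" "n < 3"
  shows "by_strand i j (f i) (f j) (f k) n = f n"
proof -
  have "n = 0 \<or> n = 1 \<or> n = 2" using assms(5) by arith
  then show ?thesis using perm3_cases[OF assms(1-4)] unfolding by_strand_def by auto
qed

lemma by_strand_mem: "u1 \<in> A \<Longrightarrow> u2 \<in> A \<Longrightarrow> u3 \<in> A \<Longrightarrow> by_strand i j u1 u2 u3 n \<in> A"
  unfolding by_strand_def by simp

lemma Un_annotate_by_strand:
  assumes "i < 3" "j < 3" "k < 3" "distinct [i, j, k]"
  shows "set (annotate (g i) [e1, d1, f1]) \<union> set (annotate (g j) [e2, d2, f2]) \<union> set (annotate (g k) [e3, d3, f3]) =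
    set (annotate (g 0) [by_strand i j e1 e2 e3 0, by_strand i j d1 d2 d3 0, by_strand i j f1 f2 f3 0]) \<union>
    set (annotate (g 1) [by_strand i j e1 e2 e3 1, by_strand i j d1 d2 d3 1, by_strand i j f1 f2 f3 1]) \<union>
    set (annotate (g 2) [by_strand i j e1 e2 e3 2, by_strand i j d1 d2 d3 2, by_strand i j f1 f2 f3 2])"
  using perm3_cases[OF assms] by (elim disjE conjE) (simp_all add: by_strand_def, blast+)

lemma consistent_crossing_pairs:
  assumes "distinct [x, y, z]"
  shows "consistent alpha beta ({((x, True, sx), a1, a2), ((x, False, sx), b1, b2)} \<union>
      {((y, True, sy), c1, c2), ((y, False, sy), d1, d2)} \<union> {((z, True, sz), e1, e2), ((z, False, sz), f1, f2)}) \<longleftrightarrow>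
    crossing_ok alpha beta sx a1 a2 b1 b2 \<and> crossing_ok alpha beta sy c1 c2 d1 d2 \<and> crossing_ok alpha beta sz e1 e2 f1 f2"
  using assms unfolding consistent_def by auto

lemma consistent_r3_segs:
  assumes "distinct [x, y, z]"
  shows "consistent alpha beta (set (annotate (r3_seg x y z sx sy sz oT oM oB 0) [t0, t1, t2]) \<union>
      set (annotate (r3_seg x y z sx sy sz oT oM oB 1) [m0, m1, m2]) \<union>
      set (annotate (r3_seg x y z sx sy sz oT oM oB 2) [b0, b1, b2])) \<longleftrightarrow>
    r3_colors_ok alpha beta sx sy sz oT oM oB t0 t1 t2 m0 m1 m2 b0 b1 b2"
proof -
  have "set (annotate (r3_seg x y z sx sy sz oT oM oB 0) [t0, t1, t2]) \<union>
      set (annotate (r3_seg x y z sx sy sz oT oM oB 1) [m0, m1, m2]) \<union>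
      set (annotate (r3_seg x y z sx sy sz oT oM oB 2) [b0, b1, b2]) =
    {((x, True, sx), if oT then t0 else t1, if oT then t1 else t2),
     ((x, False, sx), if oM then m0 else m1, if oM then m1 else m2)} \<union>
    {((y, True, sy), if oT then t1 else t0, if oT then t2 else t1),
     ((y, False, sy), if oB then b0 else b1, if oB then b1 else b2)} \<union>
    {((z, True, sz), if oM then m1 else m0, if oM then m2 else m1),
     ((z, False, sz), if oB then b1 else b0, if oB then b2 else b1)}"
    by (cases oT; cases oM; cases oB) (auto simp: r3_seg_def)
  then show ?thesis unfolding r3_colors_ok_def by (simp only: consistent_crossing_pairs[OF assms])
qed

lemma labels_r3_seg: "fst ` set (r3_seg x y z sx sy sz oT oM oB n) \<subseteq> {x, y, z}"
  by (auto simp: r3_seg_def)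

lemma consistent_R3_split:
  fixes sx sy sz oT oM oB :: bool
  assumes len: "length C1 = length p1" "length C2 = length p2" "length C3 = length p3" "C4 \<noteq> []"
    and ijk: "i < 3" "j < 3" "k < 3" "distinct [i, j, k]"
    and xyz: "distinct [x, y, z]" and lab: "fst ` set (p1 @ p2 @ p3 @ p4) \<inter> {x, y, z} = {}"
  defines "g \<equiv> r3_seg x y z sx sy sz oT oM oB"
  shows "consistent alpha beta (set (annotate (p1 @ g i @ p2 @ g j @ p3 @ g k @ p4)
      (C1 @ e1 # d1 # C2 @ e2 # d2 # C3 @ e3 # d3 # C4))) \<longleftrightarrow>
    consistent alpha beta (set (annotate p1 (C1 @ [e1])) \<union> set (annotate p2 (C2 @ [e2])) \<union>
      set (annotate p3 (C3 @ [e3])) \<union> set (annotate p4 C4)) \<and>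
    r3_colors_ok alpha beta sx sy sz oT oM oB
      (by_strand i j e1 e2 e3 0) (by_strand i j d1 d2 d3 0) (by_strand i j (hd (C2 @ [e2])) (hd (C3 @ [e3])) (hd C4) 0)
      (by_strand i j e1 e2 e3 1) (by_strand i j d1 d2 d3 1) (by_strand i j (hd (C2 @ [e2])) (hd (C3 @ [e3])) (hd C4) 1)
      (by_strand i j e1 e2 e3 2) (by_strand i j d1 d2 d3 2) (by_strand i j (hd (C2 @ [e2])) (hd (C3 @ [e3])) (hd C4) 2)"
proof -
  let ?out = "set (annotate p1 (C1 @ [e1])) \<union> set (annotate p2 (C2 @ [e2])) \<union> set (annotate p3 (C3 @ [e3])) \<union>
    set (annotate p4 C4)"
  let ?loc = "set (annotate (g i) [e1, d1, hd (C2 @ [e2])]) \<union> set (annotate (g j) [e2, d2, hd (C3 @ [e3])]) \<union>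
    set (annotate (g k) [e3, d3, hd C4])"
  have "length (g n) = 2" for n unfolding g_def by (simp add: r3_seg_def)
  then have "annotate (p1 @ g i @ p2 @ g j @ p3 @ g k @ p4) (C1 @ e1 # d1 # C2 @ e2 # d2 # C3 @ e3 # d3 # C4) =
      annotate p1 (C1 @ [e1]) @ annotate (g i) [e1, d1, hd (C2 @ [e2])] @ annotate p2 (C2 @ [e2]) @
      annotate (g j) [e2, d2, hd (C3 @ [e3])] @ annotate p3 (C3 @ [e3]) @ annotate (g k) [e3, d3, hd C4] @
      annotate p4 C4"
    using len by (simp add: annotate_append annotate_Cons2 hd_append)
  then have set_cs: "set (annotate (p1 @ g i @ p2 @ g j @ p3 @ g k @ p4)
      (C1 @ e1 # d1 # C2 @ e2 # d2 # C3 @ e3 # d3 # C4)) = ?out \<union> ?loc"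
    by auto
  have loc_labels: "fst (fst e) \<in> {x, y, z}" if "e \<in> ?loc" for e
    using that labels_r3_seg unfolding g_def by (blast dest: label_annotate)
  have union: "consistent alpha beta (?out \<union> ?loc) \<longleftrightarrow> consistent alpha beta ?out \<and> consistent alpha beta ?loc"
  proof (rule consistent_Un)
    fix e e' assume "e \<in> ?out" "e' \<in> ?loc"
    then have "fst (fst e) \<in> fst ` set (p1 @ p2 @ p3 @ p4)" "fst (fst e') \<in> {x, y, z}"
      using loc_labels by (auto dest!: label_annotate)
    with lab show "fst (fst e) \<noteq> fst (fst e')" by (metis IntI emptyE)
  qed
  show ?thesis
    unfolding set_cs union unfolding Un_annotate_by_strand[OF ijk] unfolding g_def consistent_r3_segs[OF xyz] ..
qed

context finite_biquandle
begin

lemma color_lists_R3_iff: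
  fixes sx sy sz oT oM oB :: bool
  assumes len: "length C1 = length p1" "length C2 = length p2" "length C3 = length p3" "length C4 = Suc (length p4)"
    and ijk: "i < 3" "j < 3" "k < 3" "distinct [i, j, k]"
    and xyz: "distinct [x, y, z]" and lab: "fst ` set (p1 @ p2 @ p3 @ p4) \<inter> {x, y, z} = {}"
  defines "g \<equiv> r3_seg x y z sx sy sz oT oM oB"
  shows "C1 @ e1 # d1 # C2 @ e2 # d2 # C3 @ e3 # d3 # C4 \<in> color_lists X alpha beta (p1 @ g i @ p2 @ g j @ p3 @ g k @ p4) p q \<longleftrightarrow>
    set (C1 @ e1 # C2 @ e2 # C3 @ e3 # C4) \<subseteq> X \<and> hd (C1 @ [e1]) = p \<and> last C4 = q \<and>
    consistent alpha beta (set (annotate p1 (C1 @ [e1])) \<union> set (annotate p2 (C2 @ [e2])) \<union>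
      set (annotate p3 (C3 @ [e3])) \<union> set (annotate p4 C4)) \<and>
    d1 \<in> X \<and> d2 \<in> X \<and> d3 \<in> X \<and>
    r3_colors_ok alpha beta sx sy sz oT oM oB
      (by_strand i j e1 e2 e3 0) (by_strand i j d1 d2 d3 0) (by_strand i j (hd (C2 @ [e2])) (hd (C3 @ [e3])) (hd C4) 0)
      (by_strand i j e1 e2 e3 1) (by_strand i j d1 d2 d3 1) (by_strand i j (hd (C2 @ [e2])) (hd (C3 @ [e3])) (hd C4) 1)
      (by_strand i j e1 e2 e3 2) (by_strand i j d1 d2 d3 2) (by_strand i j (hd (C2 @ [e2])) (hd (C3 @ [e3])) (hd C4) 2)"
proof -
  have C4: "C4 \<noteq> []" using len by auto
  note split = consistent_R3_split[OF len(1-3) C4 ijk xyz lab, of alpha beta sx sy sz oT oM oB, folded g_def]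
  have "length (g n) = 2" for n unfolding g_def by (simp add: r3_seg_def)
  with split show ?thesis using len C4 unfolding color_lists_def by (auto simp: hd_append)
qed

lemma R3_boundary_extends:
  fixes sx sy sz oT oM oB :: bool
  assumes ok: "r3_ok sx sy sz oT oM oB"
    and ijk: "i < 3" "j < 3" "k < 3" "distinct [i, j, k]"
    and xyz: "distinct [x, y, z]" and lab: "fst ` set (p1 @ p2 @ p3 @ p4) \<inter> {x, y, z} = {}"
    and len: "length C1 = length p1" "length C2 = length p2" "length C3 = length p3" "length C4 = Suc (length p4)"
  defines "g \<equiv> r3_seg x y z sx sy sz oT oM oB" and "g' \<equiv> r3_seg x y z sx sy sz (\<not> oT) (\<not> oM) (\<not> oB)"
  assumes cs: "C1 @ e1 # d1 # C2 @ e2 # d2 # C3 @ e3 # d3 # C4 \<in> color_lists X alpha beta (p1 @ g i @ p2 @ g j @ p3 @ g k @ p4) p q"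
  shows "\<exists>d1' d2' d3'.
    C1 @ e1 # d1' # C2 @ e2 # d2' # C3 @ e3 # d3' # C4 \<in> color_lists X alpha beta (p1 @ g' i @ p2 @ g' j @ p3 @ g' k @ p4) p q"
proof -
  let ?f1 = "hd (C2 @ [e2])" and ?f2 = "hd (C3 @ [e3])" and ?f3 = "hd C4"
  note iff = color_lists_R3_iff[OF len ijk xyz lab]
  have A: "set (C1 @ e1 # C2 @ e2 # C3 @ e3 # C4) \<subseteq> X \<and> hd (C1 @ [e1]) = p \<and> last C4 = q \<and>
      consistent alpha beta (set (annotate p1 (C1 @ [e1])) \<union> set (annotate p2 (C2 @ [e2])) \<union>
        set (annotate p3 (C3 @ [e3])) \<union> set (annotate p4 C4))"
    and d: "d1 \<in> X" "d2 \<in> X" "d3 \<in> X"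
    and r3: "r3_colors_ok alpha beta sx sy sz oT oM oB
      (by_strand i j e1 e2 e3 0) (by_strand i j d1 d2 d3 0) (by_strand i j ?f1 ?f2 ?f3 0)
      (by_strand i j e1 e2 e3 1) (by_strand i j d1 d2 d3 1) (by_strand i j ?f1 ?f2 ?f3 1)
      (by_strand i j e1 e2 e3 2) (by_strand i j d1 d2 d3 2) (by_strand i j ?f1 ?f2 ?f3 2)"
    using cs unfolding g_def iff by blast+
  have "C4 \<noteq> []" using len(4) by auto
  then have "{?f1, ?f2, ?f3} \<subseteq> set (C1 @ e1 # C2 @ e2 # C3 @ e3 # C4)" by (auto simp: hd_append)
  with A have "?f1 \<in> X" "?f2 \<in> X" "?f3 \<in> X" by blast+
  then have bX: "by_strand i j e1 e2 e3 n \<in> X" "by_strand i j d1 d2 d3 n \<in> X" "by_strand i j ?f1 ?f2 ?f3 n \<in> X"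
    for n using A d by (simp_all add: by_strand_mem)
  obtain T M B where TMB: "T \<in> X" "M \<in> X" "B \<in> X"
    "r3_colors_ok alpha beta sx sy sz (\<not> oT) (\<not> oM) (\<not> oB)
      (by_strand i j e1 e2 e3 0) T (by_strand i j ?f1 ?f2 ?f3 0)
      (by_strand i j e1 e2 e3 1) M (by_strand i j ?f1 ?f2 ?f3 1)
      (by_strand i j e1 e2 e3 2) B (by_strand i j ?f1 ?f2 ?f3 2)"
    using r3_exists[OF ok r3 bX(1,3)[of 0] bX(1,3)[of 1] bX(1,3)[of 2] bX(2)[of 0] bX(2)[of 1] bX(2)[of 2]] by blast
  define new where "new n = (if n = 0 then T else if n = 1 then M else B)" for n :: nat
  have "by_strand i j (new i) (new j) (new k) n = new n" if "n < 3" for n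
    using by_strand_self[OF ijk that] .
  then have "by_strand i j (new i) (new j) (new k) 0 = T" "by_strand i j (new i) (new j) (new k) 1 = M"
    "by_strand i j (new i) (new j) (new k) 2 = B" by (simp_all add: new_def)
  moreover have "new i \<in> X" "new j \<in> X" "new k \<in> X" using TMB by (simp_all add: new_def)
  ultimately show ?thesis using A TMB(4) unfolding g'_def iff by blast
qed

lemma R3_interior_unique:
  fixes sx sy sz oT oM oB :: bool
  assumes ok: "r3_ok sx sy sz oT oM oB"
    and ijk: "i < 3" "j < 3" "k < 3" "distinct [i, j, k]"
    and xyz: "distinct [x, y, z]" and lab: "fst ` set (p1 @ p2 @ p3 @ p4) \<inter> {x, y, z} = {}"
    and len: "length C1 = length p1" "length C2 = length p2" "length C3 = length p3" "length C4 = Suc (length p4)"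
  defines "g \<equiv> r3_seg x y z sx sy sz oT oM oB"
  assumes "C1 @ e1 # d1 # C2 @ e2 # d2 # C3 @ e3 # d3 # C4 \<in> color_lists X alpha beta (p1 @ g i @ p2 @ g j @ p3 @ g k @ p4) p q"
    and "C1 @ e1 # d1' # C2 @ e2 # d2' # C3 @ e3 # d3' # C4 \<in> color_lists X alpha beta (p1 @ g i @ p2 @ g j @ p3 @ g k @ p4) p q"
  shows "d1 = d1' \<and> d2 = d2' \<and> d3 = d3'"
proof -
  let ?f1 = "hd (C2 @ [e2])" and ?f2 = "hd (C3 @ [e3])" and ?f3 = "hd C4"
  have A: "set (C1 @ e1 # C2 @ e2 # C3 @ e3 # C4) \<subseteq> X"
    and d: "d1 \<in> X" "d2 \<in> X" "d3 \<in> X" "d1' \<in> X" "d2' \<in> X" "d3' \<in> X"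
    and r3: "r3_colors_ok alpha beta sx sy sz oT oM oB
      (by_strand i j e1 e2 e3 0) (by_strand i j d1 d2 d3 0) (by_strand i j ?f1 ?f2 ?f3 0)
      (by_strand i j e1 e2 e3 1) (by_strand i j d1 d2 d3 1) (by_strand i j ?f1 ?f2 ?f3 1)
      (by_strand i j e1 e2 e3 2) (by_strand i j d1 d2 d3 2) (by_strand i j ?f1 ?f2 ?f3 2)"
      "r3_colors_ok alpha beta sx sy sz oT oM oB
      (by_strand i j e1 e2 e3 0) (by_strand i j d1' d2' d3' 0) (by_strand i j ?f1 ?f2 ?f3 0)
      (by_strand i j e1 e2 e3 1) (by_strand i j d1' d2' d3' 1) (by_strand i j ?f1 ?f2 ?f3 1)
      (by_strand i j e1 e2 e3 2) (by_strand i j d1' d2' d3' 2) (by_strand i j ?f1 ?f2 ?f3 2)"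
    using assms(13,14) unfolding g_def color_lists_R3_iff[OF len ijk xyz lab] by blast+
  have "C4 \<noteq> []" using len(4) by auto
  then have "{?f1, ?f2, ?f3} \<subseteq> set (C1 @ e1 # C2 @ e2 # C3 @ e3 # C4)" by (auto simp: hd_append)
  with A have "?f1 \<in> X" "?f2 \<in> X" "?f3 \<in> X" by blast+
  then have bX: "by_strand i j e1 e2 e3 n \<in> X" "by_strand i j ?f1 ?f2 ?f3 n \<in> X"
    "by_strand i j d1 d2 d3 n \<in> X" "by_strand i j d1' d2' d3' n \<in> X" for n
    using A d by (simp_all add: by_strand_mem)
  have eq: "by_strand i j d1 d2 d3 n = by_strand i j d1' d2' d3' n" if "n < 3" for n
  proof -
    have "n = 0 \<or> n = 1 \<or> n = 2" using that by arith
    then show ?thesis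
      using r3_unique[OF ok r3 bX(1,2)[of 0] bX(1,2)[of 1] bX(1,2)[of 2] bX(3)[of 0] bX(3)[of 1] bX(3)[of 2]
        bX(4)[of 0] bX(4)[of 1] bX(4)[of 2]] by auto
  qed
  show ?thesis using eq[OF ijk(1)] eq[OF ijk(2)] eq[OF ijk(3)] by_strand_at[OF ijk(4)] by metis
qed

lemma card_color_lists_R3_le:
  fixes sx sy sz oT oM oB :: bool
  assumes ok: "r3_ok sx sy sz oT oM oB"
    and ijk: "i < 3" "j < 3" "k < 3" "distinct [i, j, k]"
    and xyz: "distinct [x, y, z]" and lab: "fst ` set (p1 @ p2 @ p3 @ p4) \<inter> {x, y, z} = {}"
  defines "g \<equiv> r3_seg x y z sx sy sz oT oM oB" and "g' \<equiv> r3_seg x y z sx sy sz (\<not> oT) (\<not> oM) (\<not> oB)"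
  shows "card (color_lists X alpha beta (p1 @ g i @ p2 @ g j @ p3 @ g k @ p4) p q) \<le>
    card (color_lists X alpha beta (p1 @ g' i @ p2 @ g' j @ p3 @ g' k @ p4) p q)"
    (is "card ?A \<le> card ?B")
proof -
  define same_boundary where "same_boundary cs cs' \<longleftrightarrow> (\<exists>C1 e1 d1 C2 e2 d2 C3 e3 d3 C4 d1' d2' d3'.
     length C1 = length p1 \<and> length C2 = length p2 \<and> length C3 = length p3 \<and> length C4 = Suc (length p4) \<and>
     cs = C1 @ e1 # d1 # C2 @ e2 # d2 # C3 @ e3 # d3 # C4 \<and> cs' = C1 @ e1 # d1' # C2 @ e2 # d2' # C3 @ e3 # d3' # C4)"
    for cs cs' :: "'a list"
  show ?thesis
  proof (rule card_le_if_inj_on_rel[where r = same_boundary])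
    show "finite ?B" by (rule finite_color_lists[OF finite_X])
  next
    fix cs assume cs: "cs \<in> ?A"
    have "length (g n) = 2" for n unfolding g_def by (simp add: r3_seg_def)
    then have "length cs = length p1 + 2 + (length p2 + 2 + (length p3 + 2 + Suc (length p4)))"
      using cs by (simp add: color_lists_def)
    then obtain C1 e1 d1 C2 e2 d2 C3 e3 d3 C4 where dec: "cs = C1 @ e1 # d1 # C2 @ e2 # d2 # C3 @ e3 # d3 # C4"
      and len: "length C1 = length p1" "length C2 = length p2" "length C3 = length p3" "length C4 = Suc (length p4)"
      by (elim split_list_around_pair) simp
    then obtain d1' d2' d3' where "C1 @ e1 # d1' # C2 @ e2 # d2' # C3 @ e3 # d3' # C4 \<in> ?B"
      using R3_boundary_extends[OF ok ijk xyz lab len] cs unfolding g_def g'_def by blast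
    with dec len show "\<exists>cs'. cs' \<in> ?B \<and> same_boundary cs cs'" unfolding same_boundary_def by blast
  next
    fix cs1 cs2 cs' assume cs: "cs1 \<in> ?A" "cs2 \<in> ?A" and rel: "same_boundary cs1 cs'" "same_boundary cs2 cs'"
    obtain C1 e1 d1 C2 e2 d2 C3 e3 d3 C4 d1' d2' d3' where
      len: "length C1 = length p1" "length C2 = length p2" "length C3 = length p3" "length C4 = Suc (length p4)"
      and cs1: "cs1 = C1 @ e1 # d1 # C2 @ e2 # d2 # C3 @ e3 # d3 # C4"
      and cs'1: "cs' = C1 @ e1 # d1' # C2 @ e2 # d2' # C3 @ e3 # d3' # C4"
      using rel(1) unfolding same_boundary_def by blast
    obtain D1 f1 g1 D2 f2 g2 D3 f3 g3 D4 g1' g2' g3' where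
      len': "length D1 = length p1" "length D2 = length p2" "length D3 = length p3" "length D4 = Suc (length p4)"
      and cs2: "cs2 = D1 @ f1 # g1 # D2 @ f2 # g2 # D3 @ f3 # g3 # D4"
      and cs'2: "cs' = D1 @ f1 # g1' # D2 @ f2 # g2' # D3 @ f3 # g3' # D4"
      using rel(2) unfolding same_boundary_def by blast
    have boundary: "D1 = C1 \<and> f1 = e1 \<and> D2 = C2 \<and> f2 = e2 \<and> D3 = C3 \<and> f3 = e3 \<and> D4 = C4"
      using cs'1 cs'2 len len' by (simp add: append_eq_append_conv)
    with cs cs1 cs2 have "d1 = g1 \<and> d2 = g2 \<and> d3 = g3"
      using R3_interior_unique[OF ok ijk xyz lab len] unfolding g_def by blast
    with cs1 cs2 boundary show "cs1 = cs2" by simp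
  qed
qed

end

section \<open>Invariance under all moves\<close>

lemma consistent_relabel:
  assumes inj: "inj_on f (fst ` set w)"
  shows "consistent alpha beta (set (annotate (map (\<lambda>(l, ov, s). (f l, ov, s)) w) cs)) \<longleftrightarrow>
    consistent alpha beta (set (annotate w cs))"
proof -
  let ?F = "\<lambda>(x, a, b). ((\<lambda>(l, ov, s). (f l, ov, s)) x, a, b)"
  have set_eq: "set (annotate (map (\<lambda>(l, ov, s). (f l, ov, s)) w) cs) = ?F ` set (annotate w cs)"
    unfolding annotate_map by simp
  have same_label: "l1 = l2" if "((l1, ov1, s1), a1) \<in> set (annotate w cs)" "((l2, ov2, s2), a2) \<in> set (annotate w cs)"
    "f l1 = f l2" for l1 l2 ov1 ov2 s1 s2 a1 a2
  proof (rule inj_onD[OF inj that(3)])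
    show "l1 \<in> fst ` set w" "l2 \<in> fst ` set w"
      using label_annotate[OF that(1)] label_annotate[OF that(2)] by simp_all
  qed
  show ?thesis
    unfolding set_eq consistent_def
  proof (intro iffI allI impI)
    fix l s a a' b b'
    assume H: "\<forall>l s a a' b b'. ((l, True, s), a, a') \<in> ?F ` set (annotate w cs) \<longrightarrow>
      ((l, False, s), b, b') \<in> ?F ` set (annotate w cs) \<longrightarrow> crossing_ok alpha beta s a a' b b'"
      and over: "((l, True, s), a, a') \<in> set (annotate w cs)" and under: "((l, False, s), b, b') \<in> set (annotate w cs)"
    have "((f l, True, s), a, a') \<in> ?F ` set (annotate w cs)" using over by (rule rev_image_eqI) simp
    moreover have "((f l, False, s), b, b') \<in> ?F ` set (annotate w cs)" using under by (rule rev_image_eqI) simp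
    ultimately show "crossing_ok alpha beta s a a' b b'" using H by blast
  next
    fix l s a a' b b'
    assume H: "\<forall>l s a a' b b'. ((l, True, s), a, a') \<in> set (annotate w cs) \<longrightarrow>
      ((l, False, s), b, b') \<in> set (annotate w cs) \<longrightarrow> crossing_ok alpha beta s a a' b b'"
      and "((l, True, s), a, a') \<in> ?F ` set (annotate w cs)" "((l, False, s), b, b') \<in> ?F ` set (annotate w cs)"
    then obtain l1 l2 where over: "((l1, True, s), a, a') \<in> set (annotate w cs)"
      and under: "((l2, False, s), b, b') \<in> set (annotate w cs)" and "f l1 = l" "f l2 = l" by auto
    then have "l1 = l2" using same_label[OF over under] by simp
    with H over under show "crossing_ok alpha beta s a a' b b'" by blast
  qed
qed

lemma count_labels_le_2: "valid_code w \<Longrightarrow> count_list (map fst w) l \<le> 2"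
proof (cases "l \<in> fst ` set w")
  case True
  assume "valid_code w"
  with True obtain i j where "\<forall>k<length w. fst (w ! k) = l \<longrightarrow> k = i \<or> k = j"
    unfolding valid_code_def by blast
  then have "{k. k < length w \<and> fst (w ! k) = l} \<subseteq> {i, j}" by auto
  then have "card {k. k < length w \<and> fst (w ! k) = l} \<le> card {i, j}" by (rule card_mono[rotated]) simp
  also have "\<dots> \<le> 2" by (simp add: card_insert_if)
  finally have "card {k. k < length w \<and> fst (w ! k) = l} \<le> 2" .
  then show ?thesis by (simp add: count_list_eq_length_filter filter_map length_filter_conv_card comp_def eq_commute)
qed (simp add: count_list_0_iff)

lemma valid_code_R1_fresh:
  assumes "valid_code (u @ [(l, ov, s), (l, \<not> ov, s)] @ v)"
  shows "l \<notin> fst ` set (u @ v)"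
proof -
  have "count_list (map fst (u @ v)) l = 0" using count_labels_le_2[OF assms, of l] by simp
  then show ?thesis unfolding count_list_0_iff by (simp add: image_Un)
qed

lemma valid_code_R2_fresh:
  assumes "valid_code (u @ [(a, ov, s), (b, ov, \<not> s)] @ v @ b2 @ x)" and b2: "map fst b2 = [a, b] \<or> map fst b2 = [b, a]"
  shows "a \<noteq> b" and "fst ` set ([(a, ov, s), (b, ov, \<not> s)] @ b2) \<inter> fst ` set (u @ v @ x) = {}"
proof -
  have count: "count_list (map fst (u @ v @ x)) l + count_list [a, b, a, b] l \<le> 2" for l
    using count_labels_le_2[OF assms(1), of l] b2 by auto
  then have "a \<noteq> b" using count[of a] by auto
  with count[of a] count[of b] have "count_list (map fst (u @ v @ x)) a = 0" "count_list (map fst (u @ v @ x)) b = 0"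
    by auto
  then have "a \<notin> fst ` set (u @ v @ x)" "b \<notin> fst ` set (u @ v @ x)" unfolding count_list_0_iff by (simp_all add: image_Un)
  moreover have "fst ` set b2 = {a, b}" using b2 by (metis insert_commute list.set(1,2) list.set_map)
  ultimately show "a \<noteq> b" "fst ` set ([(a, ov, s), (b, ov, \<not> s)] @ b2) \<inter> fst ` set (u @ v @ x) = {}"
    using \<open>a \<noteq> b\<close> by auto
qed

lemma count_labels_r3_segs:
  assumes "i < 3" "j < 3" "k < 3" "distinct [i, j, k]"
  shows "count_list (map fst (r3_seg x y z sx sy sz oT oM oB i @ r3_seg x y z sx sy sz oT oM oB j @
      r3_seg x y z sx sy sz oT oM oB k)) l = 2 * (of_bool (x = l) + of_bool (y = l) + of_bool (z = l))"
  using perm3_cases[OF assms] by (elim disjE conjE) (simp_all add: r3_seg_def)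

lemma valid_code_R3_fresh:
  assumes "valid_code (p1 @ r3_seg x y z sx sy sz oT oM oB i @ p2 @ r3_seg x y z sx sy sz oT oM oB j @ p3 @
      r3_seg x y z sx sy sz oT oM oB k @ p4)"
    and ijk: "i < 3" "j < 3" "k < 3" "distinct [i, j, k]"
  shows "distinct [x, y, z]" and "fst ` set (p1 @ p2 @ p3 @ p4) \<inter> {x, y, z} = {}"
proof -
  have count: "count_list (map fst (p1 @ p2 @ p3 @ p4)) l + 2 * (of_bool (x = l) + of_bool (y = l) + of_bool (z = l)) \<le> 2"
    for l using count_labels_le_2[OF assms(1), of l] count_labels_r3_segs[OF ijk, of x y z sx sy sz oT oM oB l] by simp
  have "y \<noteq> x" "z \<noteq> x" "z \<noteq> y" using count[of x] count[of y] by auto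
  moreover have "l \<notin> fst ` set (p1 @ p2 @ p3 @ p4)" if "l \<in> {x, y, z}" for l
  proof -
    have "count_list (map fst (p1 @ p2 @ p3 @ p4)) l = 0" using that count[of l] by auto
    then show ?thesis unfolding count_list_0_iff by (simp add: image_Un)
  qed
  ultimately show "distinct [x, y, z]" "fst ` set (p1 @ p2 @ p3 @ p4) \<inter> {x, y, z} = {}" by auto
qed

context finite_biquandle
begin

lemma card_color_lists_kmove:
  "kmove w w' \<Longrightarrow> card (color_lists X alpha beta w p q) = card (color_lists X alpha beta w' p q)"
proof (induction rule: kmove.induct)
  case (R1 u l ov s v)
  then show ?case using card_color_lists_R1 valid_code_R1_fresh by blast
next
  case (R2_same u a ov s b v x)
  have "map fst [(a, \<not> ov, s), (b, \<not> ov, \<not> s)] = [a, b]" by simp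
  note fresh = valid_code_R2_fresh[OF R2_same disjI1[OF this]]
  show ?case using two_block_move.card_color_lists_R2[OF two_block_move_R2_same[OF fresh(1)] fresh(2)] by simp
next
  case (R2_opp u a ov s b v x)
  have "map fst [(b, \<not> ov, \<not> s), (a, \<not> ov, s)] = [b, a]" by simp
  note fresh = valid_code_R2_fresh[OF R2_opp disjI2[OF this]]
  show ?case using two_block_move.card_color_lists_R2[OF two_block_move_R2_opp[OF fresh(1)] fresh(2)] by simp
next
  case (R3 i j k sx sy sz oT oM oB p1 x y z p2 p3 p4)
  note fresh = valid_code_R3_fresh[OF R3(6) R3(1-4)]
  show ?case
    using card_color_lists_R3_le[OF R3(5) R3(1-4) fresh, of p q]
      card_color_lists_R3_le[of sx sy sz "\<not> oT" "\<not> oM" "\<not> oB", OF _ R3(1-4) fresh, of p q] R3(5)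
    unfolding r3_ok_def by simp
next
  case (relabel w f)
  then show ?case unfolding color_lists_def consistent_relabel[OF relabel(2)] by simp
qed

lemma card_color_lists_knotoid_equiv:
  "knotoid_equiv D D' \<Longrightarrow> card (color_lists X alpha beta D p q) = card (color_lists X alpha beta D' p q)"
  unfolding knotoid_equiv_def
proof (induction rule: equivclp_induct)
  case (step w w')
  then show ?case using card_color_lists_kmove[of w w'] card_color_lists_kmove[of w' w] by auto
qed simp

end

theorem mainTheorem1:
  fixes xs :: "'a list" and alpha beta :: "'a \<Rightarrow> 'a \<Rightarrow> 'a" and D D' :: "letter list"
  assumes "distinct xs"
    and "biquandle (set xs) alpha beta"
    and "valid_code D" and "valid_code D'"
    and "knotoid_equiv D D'"
  shows "coloring_matrix xs alpha beta D = coloring_matrix xs alpha beta D'"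
proof -
  interpret finite_biquandle "set xs" alpha beta
    using assms(2) by unfold_locales simp_all
  have "card (colorings (set xs) alpha beta D p q) = card (colorings (set xs) alpha beta D' p q)" for p q
    unfolding card_colorings_eq_card_color_lists using card_color_lists_knotoid_equiv[OF assms(5)] .
  then show ?thesis unfolding coloring_matrix_def by simp
qed

end
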